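(* Let $\mathcal{D}_0^\alpha=M(\mathcal{F}_i^\alpha)$. Then an element $(u,\rho,\nu,\mu)\in\mathcal{D}^\alpha$ belongs to $\mathcal{D}_0^\alpha$ if and only if $\nu=\mu$.
   Context: Fix $\alpha\in W^{1,\infty}(\mathbb{R})$ with either $0\le\alpha(x)<1$ for all $x$, or $\alpha\equiv1$. $\mathcal{D}^\alpha$ is the set of $(u,\rho,\nu,\mu)$ with (i) $u\in L^\infty(\mathbb{R})$, $u_x\in L^2(\mathbb{R})$; (ii) $\rho\in L^2(\mathbb{R})$; (iii) $\mu\le\nu$ positive finite Radon measures on $\mathbb{R}$; (iv) $\mu_{ac}=(u_x^2+\rho^2)dx$; (v) if $0\le\alpha<1$, then $\frac{d\mu}{d\nu}>0$ and $\frac{d\mu}{d\nu}(x)=1$ whenever $u_x(x)<0$ or $\rho(x)\ne0$; (vi) if $\alpha\equiv1$, then $\mu=\nu_{ac}$. $E_1=\{f\in L^\infty(\mathbb{R}): f'\in L^2,\ \lim_{x\to-\infty}f=0\}$, $E_2=\{f\in L^\infty: f'\in L^2\}$, norms $\|f\|_\infty+\|f'\|_2$; $B=E_2\times E_2\times E_1\times L^2(\mathbb{R})\times E_1$. $\mathcal{F}^\alpha$ is the set of $X=(y,U,H,r,V)$ with $(y-\mathrm{id},U,H,r,V)\in B$ and: (i) $y-\mathrm{id},U,H,V\in W^{1,\infty}$, $r\in L^\infty$; (ii) $y_\xi\ge0$, $H_\xi\ge0$, $y_\xi+H_\xi>c$ a.e. for some $c>0$; (iii) $y_\xi V_\xi=U_\xi^2+r^2$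 a.e.; (iv) $0\le V_\xi\le H_\xi$ a.e.; (v) if $0\le\alpha<1$, there is $\kappa:\mathbb{R}\to(0,1]$ with $V_\xi=\kappa(y)H_\xi$ a.e. and $\kappa(y(\xi))=1$ whenever $U_\xi(\xi)<0$ or $r(\xi)\ne0$; (vi) if $\alpha\equiv1$, a.e. $y_\xi=0\Rightarrow V_\xi=0$ and $y_\xi>0\Rightarrow V_\xi=H_\xi$. $\mathcal{F}_i^\alpha=\{X\in\mathcal{F}^\alpha:V=H\}$. $M:\mathcal{F}^\alpha\to\mathcal{D}^\alpha$, $M(y,U,H,r,V)=(u,\rho,\nu,\mu)$ with $u(x)=U(\xi)$ for any $\xi$ with $y(\xi)=x$, $\rho\,dx=y_\#(r\,d\xi)$, $\nu=y_\#(H_\xi\,d\xi)$, $\mu=y_\#(V_\xi\,d\xi)$. *)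

theory Defs
  imports "HOL-Analysis.Analysis"
begin

definition W1inf :: "(real \<Rightarrow> real) \<Rightarrow> bool" where
  "W1inf f \<longleftrightarrow> bounded (range f) \<and> (\<exists>L. L-lipschitz_on UNIV f)"

definition ess_bounded :: "(real \<Rightarrow> real) \<Rightarrow> bool" where
  "ess_bounded f \<longleftrightarrow> (\<exists>C. AE x in lborel. \<bar>f x\<bar> \<le> C)"

definition L2 :: "(real \<Rightarrow> real) \<Rightarrow> bool" where
  "L2 f \<longleftrightarrow> f \<in> borel_measurable borel \<and> integrable lborel (\<lambda>x. (f x)\<^sup>2)"

definition admissible_alpha :: "(real \<Rightarrow> real) \<Rightarrow> bool" where
  "admissible_alpha \<alpha> \<longleftrightarrow> W1inf \<alpha> \<and>
     ((\<forall>x. 0 \<le> \<alpha> x \<and> \<alpha> x < 1) \<or> (\<forall>x. \<alpha> x = 1))"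

definition alpha_lt1 :: "(real \<Rightarrow> real) \<Rightarrow> bool" where
  "alpha_lt1 \<alpha> \<longleftrightarrow> (\<forall>x. 0 \<le> \<alpha> x \<and> \<alpha> x < 1)"

definition alpha_eq1 :: "(real \<Rightarrow> real) \<Rightarrow> bool" where
  "alpha_eq1 \<alpha> \<longleftrightarrow> (\<forall>x. \<alpha> x = 1)"

definition fin_borel_measure :: "real measure \<Rightarrow> bool" where
  "fin_borel_measure m \<longleftrightarrow> sets m = sets borel \<and> finite_measure m"

text \<open>The absolutely continuous part (Lebesgue decomposition) of m is f dx:
  there is a Lebesgue-null Borel set N such that m restricted to the complement of N is f dx.\<close>
definition ac_part_density :: "real measure \<Rightarrow> (real \<Rightarrow> ennreal) \<Rightarrow> bool" where
  "ac_part_density m f \<longleftrightarrow> f \<in> borel_measurable borel \<and>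
     (\<exists>N\<in>sets borel. emeasure lborel N = 0 \<and>
        (\<forall>A\<in>sets borel. emeasure m (A - N) = (\<integral>\<^sup>+x. f x * indicator A x \<partial>lborel)))"

text \<open>u in L^infinity with u_x = ux in L^2 (u taken as its continuous, locally
  absolutely continuous representative).\<close>
definition has_L2_deriv :: "(real \<Rightarrow> real) \<Rightarrow> (real \<Rightarrow> real) \<Rightarrow> bool" where
  "has_L2_deriv u ux \<longleftrightarrow> L2 ux \<and>
     (\<forall>a b. a \<le> b \<longrightarrow> set_integrable lborel {a..b} ux \<and>
            u b - u a = (LINT x:{a..b}|lborel. ux x))"

definition D_set :: "(real \<Rightarrow> real) \<Rightarrow>
    ((real \<Rightarrow> real) \<times> (real \<Rightarrow> real) \<times> real measure \<times> real measure) set" where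
  "D_set \<alpha> = {(u, \<rho>, \<nu>, \<mu>). \<exists>ux.
      ess_bounded u \<and> has_L2_deriv u ux \<and>
      L2 \<rho> \<and>
      fin_borel_measure \<nu> \<and> fin_borel_measure \<mu> \<and>
      (\<forall>A\<in>sets borel. emeasure \<mu> A \<le> emeasure \<nu> A) \<and>
      ac_part_density \<mu> (\<lambda>x. ennreal ((ux x)\<^sup>2 + (\<rho> x)\<^sup>2)) \<and>
      (alpha_lt1 \<alpha> \<longrightarrow>
         (AE x in \<nu>. RN_deriv \<nu> \<mu> x > 0) \<and>
         (AE x in lborel. (ux x < 0 \<or> \<rho> x \<noteq> 0) \<longrightarrow> RN_deriv \<nu> \<mu> x = 1)) \<and>
      (alpha_eq1 \<alpha> \<longrightarrow>
         (\<exists>g. ac_part_density \<nu> g \<and> \<mu> = density lborel g))}"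

text \<open>Membership of f in E_2 (with f Lipschitz, f' = deriv f a.e.).\<close>
definition E2 :: "(real \<Rightarrow> real) \<Rightarrow> bool" where
  "E2 f \<longleftrightarrow> bounded (range f) \<and> L2 (deriv f)"

definition E1 :: "(real \<Rightarrow> real) \<Rightarrow> bool" where
  "E1 f \<longleftrightarrow> E2 f \<and> (f \<longlongrightarrow> 0) at_bot"

type_synonym lagr = "(real \<Rightarrow> real) \<times> (real \<Rightarrow> real) \<times> (real \<Rightarrow> real) \<times> (real \<Rightarrow> real) \<times> (real \<Rightarrow> real)"

definition F_set :: "(real \<Rightarrow> real) \<Rightarrow> lagr set" where
  "F_set \<alpha> = {(y, U, H, r, V).
      E2 (\<lambda>\<xi>. y \<xi> - \<xi>) \<and> E2 U \<and> E1 H \<and> L2 r \<and> E1 V \<and>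
      W1inf (\<lambda>\<xi>. y \<xi> - \<xi>) \<and> W1inf U \<and> W1inf H \<and> W1inf V \<and> ess_bounded r \<and>
      (AE \<xi> in lborel. deriv y \<xi> \<ge> 0 \<and> deriv H \<xi> \<ge> 0) \<and>
      (\<exists>c>0. AE \<xi> in lborel. deriv y \<xi> + deriv H \<xi> > c) \<and>
      (AE \<xi> in lborel. deriv y \<xi> * deriv V \<xi> = (deriv U \<xi>)\<^sup>2 + (r \<xi>)\<^sup>2) \<and>
      (AE \<xi> in lborel. 0 \<le> deriv V \<xi> \<and> deriv V \<xi> \<le> deriv H \<xi>) \<and>
      (alpha_lt1 \<alpha> \<longrightarrow> (\<exists>\<kappa>::real \<Rightarrow> real. (\<forall>x. 0 < \<kappa> x \<and> \<kappa> x \<le> 1) \<and>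
          (AE \<xi> in lborel. deriv V \<xi> = \<kappa> (y \<xi>) * deriv H \<xi> \<and>
                ((deriv U \<xi> < 0 \<or> r \<xi> \<noteq> 0) \<longrightarrow> \<kappa> (y \<xi>) = 1)))) \<and>
      (alpha_eq1 \<alpha> \<longrightarrow>
          (AE \<xi> in lborel. (deriv y \<xi> = 0 \<longrightarrow> deriv V \<xi> = 0) \<and>
                           (deriv y \<xi> > 0 \<longrightarrow> deriv V \<xi> = deriv H \<xi>)))}"

definition Fi_set :: "(real \<Rightarrow> real) \<Rightarrow> lagr set" where
  "Fi_set \<alpha> = {(y, U, H, r, V). (y, U, H, r, V) \<in> F_set \<alpha> \<and> V = H}"

text \<open>M(X) = (u, rho, nu, mu), as a relation since rho is determined only almost everywhere.\<close>
definition M_rel :: "lagr \<Rightarrow> (real \<Rightarrow> real) \<times> (real \<Rightarrow> real) \<times> real measure \<times> real measure \<Rightarrow> bool" where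
  "M_rel X D \<longleftrightarrow> (case X of (y, U, H, r, V) \<Rightarrow> case D of (u, \<rho>, \<nu>, \<mu>) \<Rightarrow>
      (\<forall>\<xi>. u (y \<xi>) = U \<xi>) \<and>
      (\<forall>A\<in>sets borel. bounded A \<longrightarrow>
          (LINT x:A|lborel. \<rho> x) = (LINT \<xi>:(y -` A)|lborel. r \<xi>)) \<and>
      \<nu> = distr (density lborel (\<lambda>\<xi>. ennreal (deriv H \<xi>))) lborel y \<and>
      \<mu> = distr (density lborel (\<lambda>\<xi>. ennreal (deriv V \<xi>))) lborel y)"

definition D0_set :: "(real \<Rightarrow> real) \<Rightarrow>
    ((real \<Rightarrow> real) \<times> (real \<Rightarrow> real) \<times> real measure \<times> real measure) set" where
  "D0_set \<alpha> = {D. \<exists>X\<in>Fi_set \<alpha>. M_rel X D}"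

end

theory Submission
  imports Defs "HOL-Probability.Distribution_Functions"
begin

text \<open>An image \<open>M(y, U, H, r, H)\<close> of an element of \<open>F\<^sub>i\<close> has \<open>\<mu> = y\<^sub>#(H\<^sub>\<xi> d\<xi>) = \<nu>\<close>.
  Conversely, given \<open>(u, \<rho>, \<nu>, \<nu>)\<close>, let \<open>y\<close> be the generalized inverse of \<open>x \<mapsto> x + \<nu>(-\<infinity>, x]\<close>
  and put \<open>H = id - y\<close>, \<open>U = u \<circ> y\<close>, \<open>V = H\<close>. The map \<open>y\<close> is 1-Lipschitz and pushes Lebesgue
  measure forward to Lebesgue measure plus \<open>\<nu>\<close>. Differentiating, \<open>y\<^sub>\<xi> = 1 / (1 + u\<^sub>x\<^sup>2 + \<rho>\<^sup>2)\<close> at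
  \<open>y(\<xi>)\<close> off a Lebesgue-null set \<open>N\<close> carrying the singular part of \<open>\<nu>\<close>, and \<open>y\<^sub>\<xi> = 0\<close> on
  \<open>y\<^sup>-\<^sup>1(N)\<close>; with \<open>r = (\<rho> \<circ> y) y\<^sub>\<xi>\<close> this gives \<open>y\<^sub>\<xi> H\<^sub>\<xi> = U\<^sub>\<xi>\<^sup>2 + r\<^sup>2\<close>,
  \<open>y\<^sub>#(H\<^sub>\<xi> d\<xi>) = \<nu>\<close> and \<open>y\<^sub>#(r d\<xi>) = \<rho> dx\<close>. For \<open>U\<close>, AM-GM gives
  \<open>|u b - u a| \<le> ((b - a)/t + t \<cdot> \<integral>\<^sub>[\<^sub>a\<^sub>,\<^sub>b\<^sub>] u\<^sub>x\<^sup>2) / 2\<close> for all \<open>t > 0\<close>, and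
  \<open>\<integral>\<^sub>[\<^sub>a\<^sub>,\<^sub>b\<^sub>] u\<^sub>x\<^sup>2 \<le> \<nu>(a, b)\<close> with \<open>a = y \<xi>\<close>, \<open>b = y \<xi>'\<close> bounds it by \<open>H \<xi>' - H \<xi>\<close>; this makes
  \<open>U\<close> 1-Lipschitz and forces \<open>U\<^sub>\<xi> = 0\<close> wherever \<open>y\<^sub>\<xi> = 0\<close>.\<close>

section \<open>Analysis on the real line\<close>

lemma AE_lborel_not_in_negligible: "negligible N \<Longrightarrow> AE x in lborel. x \<notin> N"
proof -
  assume "negligible N"
  then have "N \<in> null_sets lebesgue" by (simp add: negligible_iff_null_sets)
  then have "AE x in lebesgue. x \<notin> N" by (rule AE_not_in)
  then show ?thesis by (simp add: AE_completion_iff)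
qed

lemma AE_right_difference_quotient_of_integral:
  fixes F h :: "real \<Rightarrow> real"
  assumes int: "\<And>a b. h integrable_on {a..b}"
    and eqF: "\<And>a b. a \<le> b \<Longrightarrow> F b - F a = integral {a..b} h"
  shows "AE x in lborel. ((\<lambda>s. (F (x + s) - F x) / s) \<longlongrightarrow> h x) (at_right 0)"
proof -
  have "\<And>a b::real. h integrable_on cbox a b" using int by simp
  then obtain N where N: "negligible N"
    "\<And>x e. \<lbrakk>x \<notin> N; 0 < e\<rbrakk> \<Longrightarrow> \<exists>d>0. \<forall>s. 0 < s \<and> s < d \<longrightarrow>
         norm(integral (cbox x (x + s *\<^sub>R One)) h /\<^sub>R s ^ DIM(real) - h x) < e"
    by (rule integrable_ccontinuous_explicit) blast
  show ?thesis using AE_lborel_not_in_negligible[OF N(1)]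
  proof eventually_elim
    case (elim x)
    show ?case unfolding tendsto_iff eventually_at_right_field
    proof (intro allI impI)
      fix e :: real assume e: "0 < e"
      obtain d where d: "d > 0" "\<And>s. 0 < s \<Longrightarrow> s < d \<Longrightarrow>
         norm(integral (cbox x (x + s *\<^sub>R One)) h /\<^sub>R s ^ DIM(real) - h x) < e"
        using N(2)[OF elim e] by blast
      show "\<exists>b>0. \<forall>y>0. y < b \<longrightarrow> dist ((F (x + y) - F x) / y) (h x) < e"
      proof (intro exI[of _ d] conjI allI impI)
        fix s :: real assume s: "0 < s" "s < d"
        have "integral (cbox x (x + s *\<^sub>R One)) h = F (x + s) - F x"
          using eqF[of x "x + s"] s by simp
        then show "dist ((F (x + s) - F x) / s) (h x) < e"
          using d(2)[OF s] by (simp add: dist_real_def divide_inverse mult.commute)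
      qed (use d in auto)
    qed
  qed
qed

lemma AE_left_difference_quotient_of_integral:
  fixes F h :: "real \<Rightarrow> real"
  assumes int: "\<And>a b. h integrable_on {a..b}"
    and eqF: "\<And>a b. a \<le> b \<Longrightarrow> F b - F a = integral {a..b} h"
  shows "AE x in lborel. ((\<lambda>s. (F (x + s) - F x) / s) \<longlongrightarrow> h x) (at_left 0)"
proof -
  \<comment> \<open>left difference quotients of \<open>F\<close> are right ones of its reflection \<open>F'\<close>\<close>
  define F' where "F' = (\<lambda>t. - F (- t))"
  define h' where "h' = (\<lambda>t. h (- t))"
  have int': "h' integrable_on {a..b}" for a b
    unfolding h'_def using int[of "-b" "-a"] Henstock_Kurzweil_Integration.integrable_reflect_real[where f=h and a="-b" and b="-a"]
    by simp
  have eqF': "F' b - F' a = integral {a..b} h'" if "a \<le> b" for a b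
    using eqF[of "-b" "-a"] that Henstock_Kurzweil_Integration.integral_reflect_real[where f=h and a="-b" and b="-a"]
    by (simp add: F'_def h'_def)
  have "AE x in distr lborel borel uminus. ((\<lambda>s. (F' (x + s) - F' x) / s) \<longlongrightarrow> h' x) (at_right 0)"
    unfolding lborel_distr_uminus by (rule AE_right_difference_quotient_of_integral[OF int' eqF'])
  then have "AE x in lborel. ((\<lambda>s. (F' (- x + s) - F' (- x)) / s) \<longlongrightarrow> h' (- x)) (at_right 0)"
    by (rule AE_distrD[rotated]) simp
  then show ?thesis
  proof eventually_elim
    case (elim x)
    have "(\<lambda>s. (F (x + - s) - F x) / - s) = (\<lambda>s. (F' (- x + s) - F' (- x)) / s)"
      by (rule ext) (simp add: F'_def minus_divide_left)
    then have "((\<lambda>s. (F (x + - s) - F x) / - s) \<longlongrightarrow> h x) (at_right (- 0))"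
      using elim by (simp add: h'_def)
    then show ?case by (simp add: filterlim_at_left_to_right)
  qed
qed

lemma AE_has_real_derivative_of_integral:
  fixes F h :: "real \<Rightarrow> real"
  assumes si: "\<And>a b. a \<le> b \<Longrightarrow> set_integrable lborel {a..b} h"
    and eqF: "\<And>a b. a \<le> b \<Longrightarrow> F b - F a = (LINT x:{a..b}|lborel. h x)"
  shows "AE x in lborel. (F has_real_derivative h x) (at x)"
proof -
  have int: "h integrable_on {a..b}" for a b
    by (cases "a \<le> b") (auto intro: set_borel_integral_eq_integral(1)[OF si])
  have eqF': "F b - F a = integral {a..b} h" if "a \<le> b" for a b
    using eqF[OF that] set_borel_integral_eq_integral(2)[OF si[OF that]] by simp
  have "AE x in lborel. ((\<lambda>s. (F (x + s) - F x) / s) \<longlongrightarrow> h x) (at_right 0)"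
    by (rule AE_right_difference_quotient_of_integral[OF int eqF'])
  moreover have "AE x in lborel. ((\<lambda>s. (F (x + s) - F x) / s) \<longlongrightarrow> h x) (at_left 0)"
    by (rule AE_left_difference_quotient_of_integral[OF int eqF'])
  ultimately show ?thesis
    by eventually_elim (simp add: DERIV_def filterlim_split_at)
qed

lemma continuous_on_if_integral_differences:
  fixes u ux :: "real \<Rightarrow> real"
  assumes si: "\<And>a b. a \<le> b \<Longrightarrow> set_integrable lborel {a..b} ux"
    and eq: "\<And>a b. a \<le> b \<Longrightarrow> u b - u a = (LINT x:{a..b}|lborel. ux x)"
  shows "continuous_on UNIV u"
proof -
  have "isCont u x" for x
  proof -
    define a b where "a = x - 1" and "b = x + 1"
    have int: "ux integrable_on {a..b}" using set_borel_integral_eq_integral(1)[OF si[of a b]] by (simp add: a_def b_def)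
    have c: "continuous_on {a..b} (\<lambda>y. u a + integral {a..y} ux)"
      by (intro continuous_intros indefinite_integral_continuous_1[OF int])
    have "continuous_on {a..b} u"
    proof (rule continuous_on_eq[OF c])
      fix y assume y: "y \<in> {a..b}"
      then have "u y - u a = integral {a..y} ux"
        using eq[of a y] set_borel_integral_eq_integral(2)[OF si[of a y]] by simp
      then show "u a + integral {a..y} ux = u y" by simp
    qed
    moreover have "x \<in> interior {a..b}" by (simp add: a_def b_def)
    ultimately show ?thesis using continuous_on_interior by blast
  qed
  then show ?thesis by (simp add: continuous_on_eq_continuous_at)
qed

lemma abs_le_if_AE_abs_le_continuous:
  fixes u :: "real \<Rightarrow> real"
  assumes "AE x in lborel. \<bar>u x\<bar> \<le> C" and "continuous_on UNIV u"
  shows "\<bar>u x0\<bar> \<le> C"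
proof (rule ccontr)
  assume "\<not> \<bar>u x0\<bar> \<le> C"
  then have "x0 \<in> {x. C < \<bar>u x\<bar>}" by simp
  moreover have "open {x. C < \<bar>u x\<bar>}"
    using assms(2) by (intro open_Collect_less continuous_intros) auto
  ultimately obtain d where "d > 0" and d: "ball x0 d \<subseteq> {x. C < \<bar>u x\<bar>}"
    using open_contains_ball by blast
  obtain N where N: "{x \<in> space lborel. \<not> \<bar>u x\<bar> \<le> C} \<subseteq> N" "emeasure lborel N = 0" "N \<in> sets lborel"
    using assms(1) by (rule AE_E)
  have "{x0 - d<..<x0 + d} \<subseteq> N"
  proof
    fix x assume "x \<in> {x0 - d<..<x0 + d}"
    then have "x \<in> ball x0 d" by (auto simp: dist_real_def)
    then have "C < \<bar>u x\<bar>" using d by blast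
    then show "x \<in> N" using N(1) by force
  qed
  then have "emeasure lborel {x0 - d<..<x0 + d} \<le> emeasure lborel N"
    using N(3) by (rule emeasure_mono)
  then show False
    using N(2) \<open>d > 0\<close> by simp
qed

lemma bounded_range_if_ess_bounded_continuous:
  fixes u :: "real \<Rightarrow> real"
  assumes "ess_bounded u" and "continuous_on UNIV u"
  shows "bounded (range u)"
proof -
  obtain C where "AE x in lborel. \<bar>u x\<bar> \<le> C"
    using assms(1) unfolding ess_bounded_def by blast
  then have "\<forall>x. \<bar>u x\<bar> \<le> C"
    using abs_le_if_AE_abs_le_continuous assms(2) by blast
  then show ?thesis
    unfolding bounded_iff by auto
qed

lemma emeasure_density_lborel_null:
  assumes "g \<in> borel_measurable borel" and "N \<in> sets borel" and "emeasure lborel N = 0"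
  shows "emeasure (density lborel g) N = 0"
proof -
  have "AE x in lborel. x \<notin> N"
    using assms(2,3) by (intro AE_not_in) (simp add: null_sets_def)
  then have "N \<in> null_sets (density lborel g)"
    using assms(1,2) by (subst null_sets_density_iff) (auto elim: AE_mp)
  then show ?thesis by (rule null_setsD1)
qed

lemma abs_le_amgm: "(t::real) > 0 \<Longrightarrow> \<bar>v\<bar> \<le> (1 / t + t * v\<^sup>2) / 2"
proof -
  assume t: "t > 0"
  have "0 \<le> (1 - t * \<bar>v\<bar>)\<^sup>2 / t" using t by simp
  also have "(1 - t * \<bar>v\<bar>)\<^sup>2 / t = 1 / t - 2 * \<bar>v\<bar> + t * v\<^sup>2"
    using t by (simp add: power2_eq_square field_simps)
  finally show ?thesis by simp
qed

lemma abs_diff_le_amgm_integral: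
  fixes u ux :: "real \<Rightarrow> real"
  assumes si: "set_integrable lborel {a..b} ux" and eq: "u b - u a = (LINT x:{a..b}|lborel. ux x)"
    and sq: "integrable lborel (\<lambda>x. (ux x)\<^sup>2)" and ab: "a \<le> b" and t: "t > 0"
  shows "\<bar>u b - u a\<bar> \<le> ((b - a) / t + t * (LINT x:{a..b}|lborel. (ux x)\<^sup>2)) / 2"
proof -
  have i1: "integrable lborel (\<lambda>x. indicator {a..b} x *\<^sub>R ux x)" using si by (simp add: set_integrable_def)
  have i2: "integrable lborel (\<lambda>x. indicator {a..b} x *\<^sub>R (ux x)\<^sup>2)"
    by (rule integrable_mult_indicator) (auto simp: sq)
  have i3: "integrable lborel (\<lambda>x. indicator {a..b} x :: real)"
    using ab by (intro integrable_real_indicator) auto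
  have "\<bar>u b - u a\<bar> = norm (\<integral>x. indicator {a..b} x *\<^sub>R ux x \<partial>lborel)"
    using eq by (simp add: set_lebesgue_integral_def)
  also have "\<dots> \<le> (\<integral>x. (1 / (2 * t)) * indicator {a..b} x + (t / 2) * (indicator {a..b} x *\<^sub>R (ux x)\<^sup>2) \<partial>lborel)"
  proof (rule Bochner_Integration.integral_norm_bound_integral)
    show "integrable lborel (\<lambda>x. indicator {a..b} x *\<^sub>R ux x)" by (rule i1)
    show "integrable lborel (\<lambda>x. (1 / (2 * t)) * indicator {a..b} x + (t / 2) * (indicator {a..b} x *\<^sub>R (ux x)\<^sup>2))"
      using i2 i3 by (auto intro!: Bochner_Integration.integrable_add integrable_mult_right)
    fix x
    show "norm (indicator {a..b} x *\<^sub>R ux x) \<le> (1 / (2 * t)) * indicator {a..b} x + (t / 2) * (indicator {a..b} x *\<^sub>R (ux x)\<^sup>2)"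
      using abs_le_amgm[OF t, of "ux x"] by (auto split: split_indicator simp: field_simps)
  qed
  also have "\<dots> = (1 / (2 * t)) * (b - a) + (t / 2) * (LINT x:{a..b}|lborel. (ux x)\<^sup>2)"
    using i2 i3 ab by (simp add: set_lebesgue_integral_def)
  also have "\<dots> = ((b - a) / t + t * (LINT x:{a..b}|lborel. (ux x)\<^sup>2)) / 2"
    using t by (simp add: field_simps)
  finally show ?thesis .
qed

lemma has_real_derivative_zero_if_amgm_dominated:
  fixes f g :: "real \<Rightarrow> real"
  assumes f': "(f has_real_derivative 0) (at x)"
    and dominated: "\<And>t h. t > 0 \<Longrightarrow> \<bar>g (x + h) - g x\<bar> \<le> (\<bar>f (x + h) - f x\<bar> / t + t * \<bar>h\<bar>) / 2"
  shows "(g has_real_derivative 0) (at x)"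
  unfolding DERIV_def tendsto_iff eventually_at
proof (intro allI impI)
  fix e :: real
  assume e: "0 < e"
  have "\<forall>\<^sub>F h in at 0. dist ((f (x + h) - f x) / h) 0 < e\<^sup>2"
    using f' e unfolding DERIV_def tendsto_iff by simp
  then obtain d where d: "d > 0"
    "\<And>h. h \<noteq> 0 \<Longrightarrow> dist h 0 < d \<Longrightarrow> dist ((f (x + h) - f x) / h) 0 < e\<^sup>2"
    unfolding eventually_at by blast
  have "dist ((g (x + h) - g x) / h) 0 < e" if h: "h \<noteq> 0" "dist h 0 < d" for h
  proof -
    have "\<bar>f (x + h) - f x\<bar> < e\<^sup>2 * \<bar>h\<bar>"
      using d(2)[OF h] h(1) by (simp add: abs_divide pos_divide_less_eq)
    then have "\<bar>f (x + h) - f x\<bar> / e < e * \<bar>h\<bar>"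
      using e by (simp add: divide_less_eq power2_eq_square mult_ac)
    moreover have "\<And>a b c :: real. a < b \<Longrightarrow> c \<le> (a + b) / 2 \<Longrightarrow> c < b"
      by (simp add: field_simps)
    ultimately have "\<bar>g (x + h) - g x\<bar> < e * \<bar>h\<bar>"
      using dominated[OF e, of h] by blast
    then show ?thesis
      using h(1) by (simp add: abs_divide pos_divide_less_eq)
  qed
  then show "\<exists>d>0. \<forall>h\<in>UNIV. h \<noteq> 0 \<and> dist h 0 < d \<longrightarrow> dist ((g (x + h) - g x) / h) 0 < e"
    using d(1) by auto
qed

lemma rational_sequence_tendsto:
  fixes s :: real
  assumes "open I" "s \<in> I"
  shows "\<exists>p. (\<forall>n. p n \<in> \<rat> \<and> p n \<in> I) \<and> p \<longlonglongrightarrow> s"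
proof -
  obtain d where d: "d > 0" "ball s d \<subseteq> I" using assms open_contains_ball by blast
  have "\<forall>n. \<exists>r. r \<in> \<rat> \<and> s < r \<and> r < s + d / Suc n"
    using Rats_dense_in_real d(1) by (simp add: Bex_def)
  then obtain p where p: "\<And>n. p n \<in> \<rat> \<and> s < p n \<and> p n < s + d / Suc n" by metis
  have "p n \<in> I" for n
  proof -
    have "d / Suc n \<le> d" using d(1) by (simp add: divide_le_eq)
    then have "dist (p n) s < d" using p[of n] by (simp add: dist_real_def)
    then show ?thesis using d(2) by (auto simp: dist_commute)
  qed
  moreover have "p \<longlonglongrightarrow> s"
  proof (rule tendsto_sandwich[of "\<lambda>n. s" _ _ "\<lambda>n. s + d / Suc n"])
    show "\<forall>\<^sub>F n in sequentially. s \<le> p n" using p by (simp add: less_imp_le)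
    show "\<forall>\<^sub>F n in sequentially. p n \<le> s + d / Suc n" using p by (simp add: less_imp_le)
    have "(\<lambda>n. d * inverse (real (Suc n))) \<longlonglongrightarrow> d * 0"
      by (intro tendsto_mult tendsto_const LIMSEQ_inverse_real_of_nat)
    then have "(\<lambda>n. s + d / Suc n) \<longlonglongrightarrow> s + 0"
      by (intro tendsto_add tendsto_const) (simp add: divide_inverse)
    then show "(\<lambda>n. s + d / Suc n) \<longlonglongrightarrow> s" by simp
  qed simp
  ultimately show ?thesis using p by blast
qed

definition diff_quot :: "(real \<Rightarrow> real) \<Rightarrow> real \<Rightarrow> real \<Rightarrow> real" where
  "diff_quot f x s = (f (x + s) - f x) / s"

text \<open>A Cauchy criterion for the difference quotients that quantifies over rationals only, so that
  it defines a Borel set; for continuous \<open>f\<close> it is equivalent to differentiability.\<close>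
definition rat_cauchy_at :: "(real \<Rightarrow> real) \<Rightarrow> real \<Rightarrow> bool" where
  "rat_cauchy_at f x \<longleftrightarrow> (\<forall>m::nat. \<exists>k::nat. \<forall>p::rat. \<forall>q::rat.
      (0 < \<bar>real_of_rat p\<bar> \<and> \<bar>real_of_rat p\<bar> < 1 / Suc k \<and> 0 < \<bar>real_of_rat q\<bar> \<and> \<bar>real_of_rat q\<bar> < 1 / Suc k)
       \<longrightarrow> \<bar>diff_quot f x (real_of_rat p) - diff_quot f x (real_of_rat q)\<bar> \<le> 1 / Suc m)"

lemma isCont_diff_quot: "continuous_on UNIV f \<Longrightarrow> s \<noteq> 0 \<Longrightarrow> isCont (diff_quot f x) s"
proof -
  assume cf: "continuous_on UNIV f" and s: "s \<noteq> 0"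
  have c1: "isCont (\<lambda>s. x + s) s" by (intro continuous_intros)
  have c2: "isCont f (x + s)" using cf by (simp add: continuous_on_eq_continuous_at)
  have "isCont (\<lambda>s. f (x + s)) s" using isCont_o2[OF c1 c2] by simp
  then show ?thesis unfolding diff_quot_def[abs_def] using s by (intro continuous_intros) auto
qed

lemma rat_cauchy_at_real:
  assumes cf: "continuous_on UNIV f" and C: "rat_cauchy_at f x"
  shows "\<exists>k::nat. \<forall>s t. (0 < \<bar>s\<bar> \<and> \<bar>s\<bar> < 1 / Suc k \<and> 0 < \<bar>t\<bar> \<and> \<bar>t\<bar> < 1 / Suc k)
       \<longrightarrow> \<bar>diff_quot f x s - diff_quot f x t\<bar> \<le> 1 / Suc m"
proof -
  obtain k where k: "\<And>p q::rat. 0 < \<bar>real_of_rat p\<bar> \<Longrightarrow> \<bar>real_of_rat p\<bar> < 1 / Suc k \<Longrightarrow> 0 < \<bar>real_of_rat q\<bar> \<Longrightarrow> \<bar>real_of_rat q\<bar> < 1 / Suc k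
       \<Longrightarrow> \<bar>diff_quot f x (real_of_rat p) - diff_quot f x (real_of_rat q)\<bar> \<le> 1 / Suc m"
    using C unfolding rat_cauchy_at_def by blast
  define I where "I = {s::real. 0 < \<bar>s\<bar> \<and> \<bar>s\<bar> < 1 / Suc k}"
  have oI: "open I" unfolding I_def by (intro open_Collect_conj open_Collect_less continuous_intros)
  have kI: "\<bar>diff_quot f x a - diff_quot f x b\<bar> \<le> 1 / Suc m" if "a \<in> \<rat>" "b \<in> \<rat>" "a \<in> I" "b \<in> I" for a b
  proof -
    from that(1) obtain p where "a = of_rat p" by (rule Rats_cases) blast
    moreover from that(2) obtain q where "b = of_rat q" by (rule Rats_cases) blast
    ultimately show ?thesis using k that(3,4) unfolding I_def by blast
  qed
  show ?thesis
  proof (intro exI[of _ k] allI impI)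
    fix s t assume st: "0 < \<bar>s\<bar> \<and> \<bar>s\<bar> < 1 / Suc k \<and> 0 < \<bar>t\<bar> \<and> \<bar>t\<bar> < 1 / Suc k"
    then have sI: "s \<in> I" and tI: "t \<in> I" unfolding I_def by auto
    obtain p where p: "\<And>n. p n \<in> \<rat> \<and> p n \<in> I" "p \<longlonglongrightarrow> s" using rational_sequence_tendsto[OF oI sI] by blast
    obtain q where q: "\<And>n. q n \<in> \<rat> \<and> q n \<in> I" "q \<longlonglongrightarrow> t" using rational_sequence_tendsto[OF oI tI] by blast
    have "(\<lambda>n. diff_quot f x (p n)) \<longlonglongrightarrow> diff_quot f x s"
      using isCont_diff_quot[OF cf, of s x] st p(2) isCont_tendsto_compose by fastforce
    moreover have "(\<lambda>n. diff_quot f x (q n)) \<longlonglongrightarrow> diff_quot f x t"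
      using isCont_diff_quot[OF cf, of t x] st q(2) isCont_tendsto_compose by fastforce
    ultimately have "(\<lambda>n. \<bar>diff_quot f x (p n) - diff_quot f x (q n)\<bar>) \<longlonglongrightarrow> \<bar>diff_quot f x s - diff_quot f x t\<bar>"
      by (intro tendsto_intros)
    then show "\<bar>diff_quot f x s - diff_quot f x t\<bar> \<le> 1 / Suc m"
      by (rule LIMSEQ_le_const2) (use kI p q in auto)
  qed
qed

lemma Cauchy_diff_quot_if_rat_cauchy_at:
  assumes cf: "continuous_on UNIV f" and C: "rat_cauchy_at f x"
  shows "Cauchy (\<lambda>n. diff_quot f x (1 / Suc n))"
proof (rule CauchyI)
  fix e :: real assume e: "0 < e"
  obtain m :: nat where m: "1 / Suc m < e"
    using reals_Archimedean[OF e] by (auto simp: inverse_eq_divide)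
  obtain k where k: "\<And>s t. 0 < \<bar>s\<bar> \<and> \<bar>s\<bar> < 1 / Suc k \<and> 0 < \<bar>t\<bar> \<and> \<bar>t\<bar> < 1 / Suc k
     \<Longrightarrow> \<bar>diff_quot f x s - diff_quot f x t\<bar> \<le> 1 / Suc m"
    using rat_cauchy_at_real[OF cf C, of m] by blast
  have "\<bar>diff_quot f x (1 / Suc p) - diff_quot f x (1 / Suc q)\<bar> < e" if "Suc k \<le> p" "Suc k \<le> q" for p q
    using that m by (intro le_less_trans[OF k]) (auto simp: divide_strict_left_mono)
  then show "\<exists>M. \<forall>p\<ge>M. \<forall>q\<ge>M. norm (diff_quot f x (1 / Suc p) - diff_quot f x (1 / Suc q)) < e"
    by auto
qed

lemma has_real_derivative_if_rat_cauchy_at: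
  assumes cf: "continuous_on UNIV f" and C: "rat_cauchy_at f x"
  shows "(f has_real_derivative lim (\<lambda>n. diff_quot f x (1 / Suc n))) (at x)"
proof -
  define a where "a = (\<lambda>n. diff_quot f x (1 / Suc n))"
  have conv: "a \<longlonglongrightarrow> lim a"
    using Cauchy_diff_quot_if_rat_cauchy_at[OF cf C]
    by (simp add: a_def Cauchy_convergent_iff convergent_LIMSEQ_iff)
  have "(diff_quot f x \<longlongrightarrow> lim a) (at 0)"
    unfolding tendsto_iff eventually_at
  proof (intro allI impI)
    fix e :: real assume e: "0 < e"
    obtain m :: nat where m: "1 / Suc m < e / 2"
      using reals_Archimedean[of "e / 2"] e by (auto simp: inverse_eq_divide)
    obtain k where k: "\<And>s t. 0 < \<bar>s\<bar> \<and> \<bar>s\<bar> < 1 / Suc k \<and> 0 < \<bar>t\<bar> \<and> \<bar>t\<bar> < 1 / Suc k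
       \<Longrightarrow> \<bar>diff_quot f x s - diff_quot f x t\<bar> \<le> 1 / Suc m"
      using rat_cauchy_at_real[OF cf C, of m] by blast
    obtain M where M: "\<And>n. n \<ge> M \<Longrightarrow> dist (a n) (lim a) < e / 2"
      using conv e unfolding tendsto_iff eventually_sequentially by (metis half_gt_zero)
    define n where "n = max M (Suc k)"
    have an: "dist (a n) (lim a) < e / 2" using M n_def by simp
    show "\<exists>d>0. \<forall>y\<in>UNIV. y \<noteq> 0 \<and> dist y 0 < d \<longrightarrow> dist (diff_quot f x y) (lim a) < e"
    proof (intro exI[of _ "1 / Suc k"] conjI ballI impI)
      fix y :: real assume y: "y \<noteq> 0 \<and> dist y 0 < 1 / Suc k"
      have "\<bar>diff_quot f x y - a n\<bar> \<le> 1 / Suc m"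
        unfolding a_def using y n_def by (intro k) (auto simp: divide_strict_left_mono)
      moreover have "\<bar>diff_quot f x y - lim a\<bar> \<le> \<bar>diff_quot f x y - a n\<bar> + \<bar>a n - lim a\<bar>" by linarith
      ultimately show "dist (diff_quot f x y) (lim a) < e" using an m by (simp add: dist_real_def)
    qed simp
  qed
  then show ?thesis unfolding DERIV_def a_def diff_quot_def[abs_def] by simp
qed

lemma rat_cauchy_at_if_has_real_derivative:
  assumes "(f has_real_derivative L) (at x)"
  shows "rat_cauchy_at f x"
  unfolding rat_cauchy_at_def
proof (intro allI)
  fix m :: nat
  have lim: "(diff_quot f x \<longlongrightarrow> L) (at 0)" using assms unfolding DERIV_def diff_quot_def[abs_def] .
  have e: "0 < 1 / (2 * Suc m)" by simp
  obtain d where d: "d > 0" "\<And>y. y \<noteq> 0 \<Longrightarrow> dist y 0 < d \<Longrightarrow> dist (diff_quot f x y) L < 1 / (2 * Suc m)"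
    using lim e unfolding tendsto_iff eventually_at by blast
  obtain k :: nat where k: "inverse (Suc k) < d" using reals_Archimedean[OF d(1)] by blast
  show "\<exists>k::nat. \<forall>p q::rat. 0 < \<bar>real_of_rat p\<bar> \<and> \<bar>real_of_rat p\<bar> < 1 / Suc k \<and> 0 < \<bar>real_of_rat q\<bar> \<and> \<bar>real_of_rat q\<bar> < 1 / Suc k
       \<longrightarrow> \<bar>diff_quot f x (real_of_rat p) - diff_quot f x (real_of_rat q)\<bar> \<le> 1 / Suc m"
  proof (intro exI[of _ k] allI impI)
    fix p q :: rat
    assume pq: "0 < \<bar>real_of_rat p\<bar> \<and> \<bar>real_of_rat p\<bar> < 1 / Suc k \<and> 0 < \<bar>real_of_rat q\<bar> \<and> \<bar>real_of_rat q\<bar> < 1 / Suc k"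
    have "dist (diff_quot f x (real_of_rat p)) L < 1 / (2 * Suc m)"
      using pq k by (intro d(2)) (auto simp: inverse_eq_divide)
    moreover have "dist (diff_quot f x (real_of_rat q)) L < 1 / (2 * Suc m)"
      using pq k by (intro d(2)) (auto simp: inverse_eq_divide)
    moreover have "\<bar>diff_quot f x (real_of_rat p) - diff_quot f x (real_of_rat q)\<bar> \<le>
        \<bar>diff_quot f x (real_of_rat p) - L\<bar> + \<bar>diff_quot f x (real_of_rat q) - L\<bar>" by linarith
    moreover have "2 * (1 / (2 * Suc m)) = 1 / real (Suc m)" by (simp add: field_simps)
    ultimately show "\<bar>diff_quot f x (real_of_rat p) - diff_quot f x (real_of_rat q)\<bar> \<le> 1 / Suc m"
      by (simp only: dist_real_def) (smt (verit))
  qed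
qed

lemma deriv_eq_rat_cauchy_limit:
  fixes f :: "real \<Rightarrow> real"
  assumes cf: "continuous_on UNIV f"
  shows "deriv f x = (if rat_cauchy_at f x then lim (\<lambda>n. diff_quot f x (1 / Suc n)) else Eps (\<lambda>_. False))"
proof (cases "rat_cauchy_at f x")
  case True
  then show ?thesis using has_real_derivative_if_rat_cauchy_at[OF cf True] DERIV_imp_deriv by simp
next
  case False
  then have nd: "\<And>D. \<not> (f has_real_derivative D) (at x)" using rat_cauchy_at_if_has_real_derivative by blast
  have "(\<lambda>D. (f has_real_derivative D) (at x)) = (\<lambda>_. False)" by (rule ext) (use nd in simp)
  then show ?thesis using False unfolding deriv_def by simp
qed

text \<open>\<open>deriv f x\<close> is a junk value (chosen by Hilbert's operator) where \<open>f\<close> is not differentiable,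
  so its measurability is not automatic.\<close>
lemma borel_measurable_deriv:
  fixes f :: "real \<Rightarrow> real"
  assumes cf: "continuous_on UNIV f"
  shows "deriv f \<in> borel_measurable borel"
proof -
  have fm[measurable]: "f \<in> borel_measurable borel" using cf by (rule borel_measurable_continuous_onI)
  have "deriv f = (\<lambda>x. if rat_cauchy_at f x then lim (\<lambda>n. diff_quot f x (1 / Suc n)) else Eps (\<lambda>_. False))"
    by (rule ext) (rule deriv_eq_rat_cauchy_limit[OF cf])
  also have "\<dots> \<in> borel_measurable borel"
    unfolding rat_cauchy_at_def diff_quot_def by measurable
  finally show ?thesis .
qed

section \<open>The Lagrangian coordinate of a finite measure\<close>

context finite_borel_measure
begin

definition id_plus_cdf :: "real \<Rightarrow> real" where
  "id_plus_cdf x = x + cdf M x"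

text \<open>The generalized inverse of \<open>id_plus_cdf\<close>, i.e. the Lagrangian path \<open>y\<close> of the paper;
  it is characterised by the Galois connection \<open>lagr_y_le_iff\<close>.\<close>
definition lagr_y :: "real \<Rightarrow> real" where
  "lagr_y \<xi> = Inf {x. \<xi> \<le> id_plus_cdf x}"

lemma id_plus_cdf_mono: "a \<le> b \<Longrightarrow> id_plus_cdf a \<le> id_plus_cdf b"
  unfolding id_plus_cdf_def using cdf_nondecreasing[of a b] by simp

lemma le_id_plus_cdf: "x \<le> id_plus_cdf x"
  unfolding id_plus_cdf_def by (simp add: cdf_def)

lemma id_plus_cdf_le: "id_plus_cdf x \<le> x + measure M UNIV"
  unfolding id_plus_cdf_def cdf_def using bounded_measure[of "{..x}"] by (simp add: borel_UNIV)

lemma id_plus_cdf_right_cont: "continuous (at_right a) id_plus_cdf"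
  unfolding id_plus_cdf_def[abs_def] by (intro continuous_intros cdf_is_right_cont)

lemma id_plus_cdf_superlevel_nonempty: "{x. \<xi> \<le> id_plus_cdf x} \<noteq> {}"
  using le_id_plus_cdf[of \<xi>] by auto

lemma id_plus_cdf_superlevel_bdd_below: "bdd_below {x. \<xi> \<le> id_plus_cdf x}"
proof -
  have "\<xi> - measure M UNIV \<le> x" if "\<xi> \<le> id_plus_cdf x" for x
    using id_plus_cdf_le[of x] that by linarith
  then show ?thesis unfolding bdd_below_def by blast
qed

lemma le_id_plus_cdf_lagr_y: "\<xi> \<le> id_plus_cdf (lagr_y \<xi>)"
proof (rule ccontr)
  assume "\<not> \<xi> \<le> id_plus_cdf (lagr_y \<xi>)"
  then have "\<forall>\<^sub>F x in at_right (lagr_y \<xi>). id_plus_cdf x < \<xi>"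
    using id_plus_cdf_right_cont[of "lagr_y \<xi>"]
    by (intro order_tendstoD(2)) (auto simp: continuous_within)
  then obtain d where d: "d > lagr_y \<xi>" "\<And>x. lagr_y \<xi> < x \<Longrightarrow> x < d \<Longrightarrow> id_plus_cdf x < \<xi>"
    unfolding eventually_at_right[of "lagr_y \<xi>" "lagr_y \<xi> + 1", OF less_add_one] by blast
  obtain x where x: "\<xi> \<le> id_plus_cdf x" "x < d"
    using cInf_lessD[OF id_plus_cdf_superlevel_nonempty[of \<xi>]] d(1) unfolding lagr_y_def by blast
  have "lagr_y \<xi> \<le> x"
    unfolding lagr_y_def using x(1) id_plus_cdf_superlevel_bdd_below by (intro cInf_lower) auto
  then show False
    using d(2)[of x] x \<open>\<not> \<xi> \<le> id_plus_cdf (lagr_y \<xi>)\<close> by (cases "lagr_y \<xi> = x") auto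
qed

lemma lagr_y_le_iff: "lagr_y \<xi> \<le> x \<longleftrightarrow> \<xi> \<le> id_plus_cdf x"
proof
  assume "lagr_y \<xi> \<le> x"
  then show "\<xi> \<le> id_plus_cdf x"
    using le_id_plus_cdf_lagr_y[of \<xi>] id_plus_cdf_mono by (meson order_trans)
next
  assume "\<xi> \<le> id_plus_cdf x"
  then show "lagr_y \<xi> \<le> x"
    unfolding lagr_y_def using id_plus_cdf_superlevel_bdd_below by (intro cInf_lower) auto
qed

lemma lagr_y_mono: "a \<le> b \<Longrightarrow> lagr_y a \<le> lagr_y b"
  using lagr_y_le_iff le_id_plus_cdf_lagr_y by (meson order_trans)

lemma lagr_y_le: "lagr_y \<xi> \<le> \<xi>"
  using lagr_y_le_iff le_id_plus_cdf by blast

lemma lagr_y_ge: "\<xi> - measure M UNIV \<le> lagr_y \<xi>"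
  using le_id_plus_cdf_lagr_y[of \<xi>] id_plus_cdf_le[of "lagr_y \<xi>"] by simp

lemma lagr_y_diff_le: "a \<le> b \<Longrightarrow> lagr_y b - lagr_y a \<le> b - a"
proof -
  assume "a \<le> b"
  then have "id_plus_cdf (lagr_y a) + (b - a) \<le> id_plus_cdf (lagr_y a + (b - a))"
    unfolding id_plus_cdf_def using cdf_nondecreasing[of "lagr_y a" "lagr_y a + (b - a)"] by simp
  then have "b \<le> id_plus_cdf (lagr_y a + (b - a))"
    using le_id_plus_cdf_lagr_y[of a] by simp
  then have "lagr_y b \<le> lagr_y a + (b - a)"
    using lagr_y_le_iff by blast
  then show ?thesis by simp
qed

lemma lipschitz_lagr_y: "1-lipschitz_on UNIV lagr_y"
proof (rule lipschitz_onI)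
  fix x z :: real
  show "dist (lagr_y x) (lagr_y z) \<le> 1 * dist x z"
    using lagr_y_diff_le[of x z] lagr_y_diff_le[of z x] lagr_y_mono[of x z] lagr_y_mono[of z x]
    by (cases "x \<le> z") (auto simp: dist_real_def)
qed simp

lemma continuous_on_lagr_y: "continuous_on UNIV lagr_y"
  using lipschitz_lagr_y lipschitz_on_continuous_on by blast

lemma borel_measurable_lagr_y[measurable]: "lagr_y \<in> borel_measurable borel"
  using continuous_on_lagr_y by (rule borel_measurable_continuous_onI)

lemma abs_diff_lagr_y_minus_id_le: "\<bar>(lagr_y x - x) - (lagr_y z - z)\<bar> \<le> \<bar>x - z\<bar>"
  using lagr_y_mono[of x z] lagr_y_mono[of z x] lagr_y_diff_le[of x z] lagr_y_diff_le[of z x]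
  by (cases "z \<le> x") auto

lemma W1inf_lagr_y_minus_id: "W1inf (\<lambda>\<xi>. lagr_y \<xi> - \<xi>)"
  unfolding W1inf_def
proof
  have "\<bar>lagr_y \<xi> - \<xi>\<bar> \<le> measure M UNIV" for \<xi>
    using lagr_y_le[of \<xi>] lagr_y_ge[of \<xi>] by simp
  then show "bounded (range (\<lambda>\<xi>. lagr_y \<xi> - \<xi>))"
    unfolding bounded_iff by auto
  show "\<exists>L. L-lipschitz_on UNIV (\<lambda>\<xi>. lagr_y \<xi> - \<xi>)"
    by (intro exI[of _ 1] lipschitz_onI) (auto simp: dist_real_def abs_diff_lagr_y_minus_id_le)
qed

definition lagr_H :: "real \<Rightarrow> real" where
  "lagr_H \<xi> = \<xi> - lagr_y \<xi>"

lemma lagr_H_bounds: "0 \<le> lagr_H \<xi>" "lagr_H \<xi> \<le> cdf M (lagr_y \<xi>)"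
  using lagr_y_le[of \<xi>] le_id_plus_cdf_lagr_y[of \<xi>] by (auto simp: lagr_H_def id_plus_cdf_def)

lemma continuous_on_lagr_H: "continuous_on UNIV lagr_H"
  unfolding lagr_H_def[abs_def] by (intro continuous_intros continuous_on_lagr_y)

lemma W1inf_lagr_H: "W1inf lagr_H"
  unfolding W1inf_def
proof
  have "\<bar>lagr_H \<xi>\<bar> \<le> measure M UNIV" for \<xi>
    using lagr_y_le[of \<xi>] lagr_y_ge[of \<xi>] by (simp add: lagr_H_def)
  then show "bounded (range lagr_H)"
    unfolding bounded_iff by auto
  have "\<bar>lagr_H x - lagr_H z\<bar> \<le> \<bar>x - z\<bar>" for x z
    using abs_diff_lagr_y_minus_id_le[of x z] unfolding lagr_H_def by (smt (verit))
  then show "\<exists>L. L-lipschitz_on UNIV lagr_H"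
    by (intro exI[of _ 1] lipschitz_onI) (auto simp: dist_real_def)
qed

lemma lagr_H_tendsto_at_bot: "(lagr_H \<longlongrightarrow> 0) at_bot"
proof (rule tendsto_sandwich[of "\<lambda>_. 0" _ _ "\<lambda>\<xi>. cdf M (lagr_y \<xi>)"])
  have "filterlim lagr_y at_bot at_bot"
    unfolding filterlim_at_bot eventually_at_bot_linorder using lagr_y_le by (meson order_trans)
  then show "((\<lambda>\<xi>. cdf M (lagr_y \<xi>)) \<longlongrightarrow> 0) at_bot"
    using cdf_lim_at_bot by (rule filterlim_compose[rotated])
qed (use lagr_H_bounds in auto)

lemma lagr_y_vimage_Ioc: "lagr_y -` {a<..b} = {id_plus_cdf a<..id_plus_cdf b}"
proof -
  have "\<And>\<xi> x. x < lagr_y \<xi> \<longleftrightarrow> id_plus_cdf x < \<xi>" using lagr_y_le_iff by (meson not_le)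
  then show ?thesis using lagr_y_le_iff by auto
qed

definition lborel_plus :: "real measure" where
  "lborel_plus = measure_of UNIV (sets borel) (\<lambda>A. emeasure lborel A + emeasure M A)"

lemma sets_lborel_plus[simp]: "sets lborel_plus = sets borel"
  unfolding lborel_plus_def using sets.sigma_sets_eq[of borel] by (simp add: sets_measure_of_conv)

lemma space_lborel_plus[simp]: "space lborel_plus = UNIV"
  unfolding lborel_plus_def by simp

lemma emeasure_lborel_plus: "A \<in> sets borel \<Longrightarrow> emeasure lborel_plus A = emeasure lborel A + emeasure M A"
  unfolding lborel_plus_def
proof (rule emeasure_measure_of_sigma)
  show "sigma_algebra UNIV (sets borel)"
    using sets.sigma_algebra_axioms[of borel] by simp
  show "positive (sets borel) (\<lambda>A. emeasure lborel A + emeasure M A)"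
    by (simp add: positive_def)
  show "countably_additive (sets borel) (\<lambda>A. emeasure lborel A + emeasure M A)"
    unfolding countably_additive_def
  proof (intro allI impI)
    fix A :: "nat \<Rightarrow> real set"
    assume A: "range A \<subseteq> sets borel" "disjoint_family A" "\<Union> (range A) \<in> sets borel"
    have A': "range A \<subseteq> sets M" using A(1) M_is_borel by simp
    have "(\<Sum>i. emeasure lborel (A i) + emeasure M (A i)) =
          (\<Sum>i. emeasure lborel (A i)) + (\<Sum>i. emeasure M (A i))"
      by (rule suminf_add[symmetric]) auto
    also have "\<dots> = emeasure lborel (\<Union>i. A i) + emeasure M (\<Union>i. A i)"
      using suminf_emeasure[of A lborel] suminf_emeasure[OF A' A(2)] A by simp
    finally show "(\<Sum>i. emeasure lborel (A i) + emeasure M (A i)) =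
          emeasure lborel (\<Union> (range A)) + emeasure M (\<Union> (range A))" .
  qed
qed

lemma nn_integral_lborel_plus:
  assumes "h \<in> borel_measurable borel"
  shows "integral\<^sup>N lborel_plus h = integral\<^sup>N lborel h + integral\<^sup>N M h"
proof -
  have eqS: "(borel_measurable lborel_plus :: (real \<Rightarrow> ennreal) set) = borel_measurable borel"
    by (rule measurable_cong_sets) simp_all
  have eqN: "(borel_measurable M :: (real \<Rightarrow> ennreal) set) = borel_measurable borel"
    by (rule measurable_cong_sets) (simp_all add: M_is_borel)
  have hS: "h \<in> borel_measurable lborel_plus" using assms eqS by (simp only:)
  from hS show ?thesis
  proof induct
    case (cong f g)
    then have "f \<in> borel_measurable borel" "g \<in> borel_measurable borel"
      using eqS by (simp_all only:)
    moreover have "f = g" using cong by auto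
    ultimately show ?case using cong by simp
  next
    case (set A)
    then have "A \<in> sets borel" "A \<in> sets M" using M_is_borel by auto
    then show ?case using set by (simp add: emeasure_lborel_plus)
  next
    case (mult u c)
    then have "u \<in> borel_measurable borel" "u \<in> borel_measurable M"
      using eqS eqN by (simp_all only:)
    then show ?case using mult by (simp add: nn_integral_cmult distrib_left)
  next
    case (add u v)
    then have "u \<in> borel_measurable borel" "u \<in> borel_measurable M"
      "v \<in> borel_measurable borel" "v \<in> borel_measurable M"
      using eqS eqN by (simp_all only:)
    then show ?case using add by (simp add: nn_integral_add)
  next
    case (seq U)
    then have m: "\<And>i. U i \<in> borel_measurable borel" "\<And>i. U i \<in> borel_measurable M"
      using eqS eqN by (simp_all only:)
    have e: "(SUP i. U i) = (\<lambda>x. SUP i. U i x)" by (rule ext) (simp add: SUP_apply image_image)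
    have inc: "\<And>L. incseq (\<lambda>i. integral\<^sup>N L (U i))"
      using seq(4) unfolding incseq_def le_fun_def by (auto intro!: nn_integral_mono)
    have "integral\<^sup>N lborel_plus (SUP i. U i) = (SUP i. integral\<^sup>N lborel_plus (U i))"
      unfolding e using seq(4) seq(1) by (rule nn_integral_monotone_convergence_SUP)
    also have "\<dots> = (SUP i. integral\<^sup>N lborel (U i) + integral\<^sup>N M (U i))"
      using seq(3) by simp
    also have "\<dots> = (SUP i. integral\<^sup>N lborel (U i)) + (SUP i. integral\<^sup>N M (U i))"
      using inc by (intro ennreal_SUP_add)
    also have "\<dots> = integral\<^sup>N lborel (SUP i. U i) + integral\<^sup>N M (SUP i. U i)"
      unfolding e using seq(4) m
      by (simp add: nn_integral_monotone_convergence_SUP)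
    finally show ?case .
  qed
qed

lemma emeasure_lagr_y_vimage_Ioc:
  assumes "a \<le> b"
  shows "emeasure lborel (lagr_y -` {a<..b}) = emeasure lborel {a<..b} + emeasure M {a<..b}"
proof -
  have "id_plus_cdf b - id_plus_cdf a = (b - a) + measure M {a<..b}"
    using cdf_diff_eq[of a b] assms by (cases "a = b") (auto simp: id_plus_cdf_def)
  then show ?thesis
    using assms id_plus_cdf_mono[OF assms]
    by (simp add: lagr_y_vimage_Ioc emeasure_eq_measure ennreal_plus)
qed

lemma distr_lagr_y: "distr lborel borel lagr_y = lborel_plus"
proof (rule measure_eqI_generator_eq_countable[where E="range (\<lambda>(a, b). {a<..b::real})"
      and \<Omega>=UNIV and A="range (\<lambda>n::nat. {- real n<..real n})"])
  show "Int_stable (range (\<lambda>(a, b). {a<..b::real}))"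
  proof (unfold Int_stable_def, safe)
    fix a b c d :: real
    have "{a<..b} \<inter> {c<..d} = {max a c<..min b d}" by auto
    then show "{a<..b} \<inter> {c<..d} \<in> range (\<lambda>(a, b). {a<..b})" by blast
  qed
  show "range (\<lambda>(a, b). {a<..b::real}) \<subseteq> Pow UNIV" by simp
  have sb: "sets borel = sigma_sets UNIV (range (\<lambda>(a, b). {a<..b::real}))"
    by (subst borel_sigma_sets_Ioc) (simp add: sets_measure_of_conv)
  show "sets (distr lborel borel lagr_y) = sigma_sets UNIV (range (\<lambda>(a, b). {a<..b::real}))"
    using sb by simp
  show "sets lborel_plus = sigma_sets UNIV (range (\<lambda>(a, b). {a<..b::real}))" using sb by simp
  show "range (\<lambda>n::nat. {- real n<..real n}) \<subseteq> range (\<lambda>(a, b). {a<..b::real})" by auto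
  show "\<Union> (range (\<lambda>n::nat. {- real n<..real n})) = UNIV"
  proof (safe)
    fix x :: real
    obtain n :: nat where "\<bar>x\<bar> < real n" using reals_Archimedean2 by blast
    then show "x \<in> \<Union> (range (\<lambda>n::nat. {- real n<..real n}))" by (intro UN_I[of n]) auto
  qed simp
  show "countable (range (\<lambda>n::nat. {- real n<..real n}))" by simp
  fix X assume "X \<in> range (\<lambda>(a, b). {a<..b::real})"
  then obtain a b where X: "X = {a<..b}" by auto
  show "emeasure (distr lborel borel lagr_y) X = emeasure lborel_plus X"
    using emeasure_lagr_y_vimage_Ioc[of a b]
    by (cases "a \<le> b") (simp_all add: X emeasure_distr emeasure_lborel_plus lagr_y_vimage_Ioc)
next
  fix X assume "X \<in> range (\<lambda>n::nat. {- real n<..real n})"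
  then obtain n where X: "X = {- real n<..real n}" by auto
  have "emeasure M X < \<infinity>" by (simp add: emeasure_eq_measure)
  then show "emeasure (distr lborel borel lagr_y) X \<noteq> \<infinity>"
    using id_plus_cdf_mono[of "- real n" "real n"] by (simp add: emeasure_distr X lagr_y_vimage_Ioc)
qed

lemma nn_integral_comp_lagr_y:
  assumes "h \<in> borel_measurable borel"
  shows "(\<integral>\<^sup>+ \<xi>. h (lagr_y \<xi>) \<partial>lborel) = integral\<^sup>N lborel h + integral\<^sup>N M h"
proof -
  have "(\<integral>\<^sup>+ \<xi>. h (lagr_y \<xi>) \<partial>lborel) = integral\<^sup>N (distr lborel borel lagr_y) h"
    using assms by (subst nn_integral_distr) auto
  also have "\<dots> = integral\<^sup>N lborel h + integral\<^sup>N M h"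
    using nn_integral_lborel_plus[OF assms] distr_lagr_y by simp
  finally show ?thesis .
qed

lemma emeasure_lagr_y_vimage:
  assumes "A \<in> sets borel"
  shows "emeasure lborel (lagr_y -` A) = emeasure lborel A + emeasure M A"
proof -
  have "emeasure lborel (lagr_y -` A) = emeasure (distr lborel borel lagr_y) A"
    using assms by (simp add: emeasure_distr)
  then show ?thesis using distr_lagr_y emeasure_lborel_plus[OF assms] by simp
qed

lemma emeasure_distr_density_comp_lagr_y:
  assumes [measurable]: "\<phi> \<in> borel_measurable borel" "A \<in> sets borel"
  shows "emeasure (distr (density lborel (\<lambda>\<xi>. \<phi> (lagr_y \<xi>))) lborel lagr_y) A
    = (\<integral>\<^sup>+x. \<phi> x * indicator A x \<partial>lborel) + (\<integral>\<^sup>+x. \<phi> x * indicator A x \<partial>M)"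
proof -
  have "emeasure (distr (density lborel (\<lambda>\<xi>. \<phi> (lagr_y \<xi>))) lborel lagr_y) A
      = (\<integral>\<^sup>+\<xi>. (\<lambda>x. \<phi> x * indicator A x) (lagr_y \<xi>) \<partial>lborel)"
    using measurable_sets_borel[OF borel_measurable_lagr_y assms(2)]
    by (subst emeasure_distr) (auto simp: emeasure_density intro!: nn_integral_cong split: split_indicator)
  also have "\<dots> = (\<integral>\<^sup>+x. \<phi> x * indicator A x \<partial>lborel) + (\<integral>\<^sup>+x. \<phi> x * indicator A x \<partial>M)"
    by (rule nn_integral_comp_lagr_y) measurable
  finally show ?thesis .
qed

end

section \<open>Energy measures\<close>

locale energy_measure = finite_borel_measure nu for nu :: "real measure" +
  fixes ux rho :: "real \<Rightarrow> real" and N :: "real set"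
  assumes ux_meas[measurable]: "ux \<in> borel_measurable borel"
    and rho_meas[measurable]: "rho \<in> borel_measurable borel"
    and N_sets[measurable]: "N \<in> sets borel"
    and N_null: "emeasure lborel N = 0"
    and emeasure_diff_N: "\<And>A. A \<in> sets borel \<Longrightarrow>
        emeasure nu (A - N) = (\<integral>\<^sup>+x. ennreal ((ux x)\<^sup>2 + (rho x)\<^sup>2) * indicator A x \<partial>lborel)"
begin

lemma sets_nu[measurable_cong]: "sets nu = sets borel"
  by (rule M_is_borel)

definition energy_density :: "real \<Rightarrow> real" where
  "energy_density x = (ux x)\<^sup>2 + (rho x)\<^sup>2"

text \<open>\<open>lagr_dy\<close> will be \<open>y\<^sub>\<xi>\<close> almost everywhere; \<open>euler_dy\<close> is the same quantity in Eulerian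
  coordinates. It vanishes on \<open>N\<close>, where the singular part of \<open>nu\<close> lives.\<close>
definition euler_dy :: "real \<Rightarrow> real" where
  "euler_dy x = (if x \<in> N then 0 else 1 / (1 + energy_density x))"

definition lagr_dy :: "real \<Rightarrow> real" where
  "lagr_dy \<xi> = euler_dy (lagr_y \<xi>)"

lemma energy_density_nonneg: "0 \<le> energy_density x"
  unfolding energy_density_def by simp

lemma borel_measurable_energy_density[measurable]: "energy_density \<in> borel_measurable borel"
  unfolding energy_density_def[abs_def] by measurable

lemma borel_measurable_euler_dy[measurable]: "euler_dy \<in> borel_measurable borel"
  unfolding euler_dy_def[abs_def] by measurable

lemma borel_measurable_lagr_dy[measurable]: "lagr_dy \<in> borel_measurable borel"
  unfolding lagr_dy_def[abs_def] by measurable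


lemma euler_dy_bounds: "0 \<le> euler_dy x" "euler_dy x \<le> 1"
  unfolding euler_dy_def using energy_density_nonneg[of x] by auto

lemma euler_dy_pos: "x \<notin> N \<Longrightarrow> 0 < euler_dy x"
  unfolding euler_dy_def using energy_density_nonneg[of x] by simp

lemma lagr_dy_bounds: "0 \<le> lagr_dy x" "lagr_dy x \<le> 1" unfolding lagr_dy_def using euler_dy_bounds by auto

lemma AE_not_in_N: "AE x in lborel. x \<notin> N"
  using N_null by (intro AE_not_in) (simp add: null_sets_def)

lemma density_indicator_compl_N:
  "density nu (indicator (- N)) = density lborel (\<lambda>x. ennreal (energy_density x))"
proof (rule measure_eqI)
  fix A assume "A \<in> sets (density nu (indicator (- N)))"
  then have [measurable]: "A \<in> sets borel" by (simp add: M_is_borel)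
  have "emeasure (density nu (indicator (- N))) A = (\<integral>\<^sup>+ x. indicator (- N) x * indicator A x \<partial>nu)"
    by (subst emeasure_density) auto
  also have "\<dots> = (\<integral>\<^sup>+ x. indicator (A - N) x \<partial>nu)"
    by (rule nn_integral_cong) (auto split: split_indicator)
  also have "\<dots> = emeasure (density lborel (\<lambda>x. ennreal (energy_density x))) A"
    using emeasure_diff_N[of A] by (simp add: M_is_borel emeasure_density energy_density_def)
  finally show "emeasure (density nu (indicator (- N))) A
    = emeasure (density lborel (\<lambda>x. ennreal (energy_density x))) A" .
qed (simp add: M_is_borel)

lemma nn_integral_nu_split:
  assumes [measurable]: "h \<in> borel_measurable borel"
  shows "(\<integral>\<^sup>+x. h x \<partial>nu)
    = (\<integral>\<^sup>+x. indicator N x * h x \<partial>nu) + (\<integral>\<^sup>+x. ennreal (energy_density x) * h x \<partial>lborel)"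
proof -
  have "(\<integral>\<^sup>+x. h x \<partial>nu) = (\<integral>\<^sup>+x. indicator N x * h x + indicator (- N) x * h x \<partial>nu)"
    by (rule nn_integral_cong) (simp split: split_indicator)
  also have "\<dots> = (\<integral>\<^sup>+x. indicator N x * h x \<partial>nu) + (\<integral>\<^sup>+x. indicator (- N) x * h x \<partial>nu)"
    by (rule nn_integral_add) auto
  also have "(\<integral>\<^sup>+x. indicator (- N) x * h x \<partial>nu) = integral\<^sup>N (density nu (indicator (- N))) h"
    by (subst nn_integral_density) auto
  also have "\<dots> = (\<integral>\<^sup>+x. ennreal (energy_density x) * h x \<partial>lborel)"
    by (simp add: density_indicator_compl_N nn_integral_density)
  finally show ?thesis .
qed

lemma euler_dy_balance:
  assumes "x \<notin> N"
  shows "ennreal (euler_dy x) + ennreal (energy_density x) * ennreal (euler_dy x) = 1"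
proof -
  have "euler_dy x + energy_density x * euler_dy x = 1"
    using assms energy_density_nonneg[of x] unfolding euler_dy_def by (simp add: field_simps)
  then show ?thesis
    using euler_dy_bounds[of x] energy_density_nonneg[of x]
    by (metis ennreal_1 ennreal_mult' ennreal_plus mult_nonneg_nonneg)
qed

lemma one_minus_euler_dy_balance:
  assumes "x \<notin> N"
  shows "ennreal (1 - euler_dy x) + ennreal (energy_density x) * ennreal (1 - euler_dy x)
    = ennreal (energy_density x)"
proof -
  have "(1 - euler_dy x) + energy_density x * (1 - euler_dy x) = (1 - euler_dy x) * (1 + energy_density x)"
    by (simp add: algebra_simps)
  also have "\<dots> = energy_density x"
    using assms energy_density_nonneg[of x] unfolding euler_dy_def by (simp add: field_simps)
  finally have "(1 - euler_dy x) + energy_density x * (1 - euler_dy x) = energy_density x" .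
  then show ?thesis
    using euler_dy_bounds[of x] energy_density_nonneg[of x]
    by (metis diff_ge_0_iff_ge ennreal_mult' ennreal_plus mult_nonneg_nonneg)
qed

lemma distr_density_lagr_dy: "distr (density lborel (\<lambda>\<xi>. ennreal (lagr_dy \<xi>))) lborel lagr_y = lborel"
proof (rule measure_eqI)
  fix A assume "A \<in> sets (distr (density lborel (\<lambda>\<xi>. ennreal (lagr_dy \<xi>))) lborel lagr_y)"
  then have [measurable]: "A \<in> sets borel" by simp
  let ?h = "\<lambda>x. ennreal (euler_dy x) * indicator A x"
  have "emeasure (distr (density lborel (\<lambda>\<xi>. ennreal (lagr_dy \<xi>))) lborel lagr_y) A
      = (\<integral>\<^sup>+x. ?h x \<partial>lborel) + (\<integral>\<^sup>+x. ?h x \<partial>nu)"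
    unfolding lagr_dy_def by (rule emeasure_distr_density_comp_lagr_y) measurable
  also have "(\<integral>\<^sup>+x. ?h x \<partial>nu) = (\<integral>\<^sup>+x. ennreal (energy_density x) * ?h x \<partial>lborel)"
  proof -
    have "(\<lambda>x. indicator N x * ?h x) = (\<lambda>_. 0)"
      by (auto simp: euler_dy_def split: split_indicator)
    then show ?thesis
      using nn_integral_nu_split[of ?h] by simp
  qed
  also have "(\<integral>\<^sup>+x. ?h x \<partial>lborel) + (\<integral>\<^sup>+x. ennreal (energy_density x) * ?h x \<partial>lborel)
      = (\<integral>\<^sup>+x. ?h x + ennreal (energy_density x) * ?h x \<partial>lborel)"
    by (rule nn_integral_add[symmetric]) measurable
  also have "\<dots> = (\<integral>\<^sup>+x. indicator A x \<partial>lborel)"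
    using AE_not_in_N
    by (rule nn_integral_cong_AE[OF AE_mp]) (auto simp: euler_dy_balance split: split_indicator)
  finally show "emeasure (distr (density lborel (\<lambda>\<xi>. ennreal (lagr_dy \<xi>))) lborel lagr_y) A
    = emeasure lborel A" by simp
qed simp

lemma distr_density_one_minus_lagr_dy:
  "distr (density lborel (\<lambda>\<xi>. ennreal (1 - lagr_dy \<xi>))) lborel lagr_y = nu"
proof (rule measure_eqI)
  fix A assume "A \<in> sets (distr (density lborel (\<lambda>\<xi>. ennreal (1 - lagr_dy \<xi>))) lborel lagr_y)"
  then have [measurable]: "A \<in> sets borel" by simp
  let ?h = "\<lambda>x. ennreal (1 - euler_dy x) * indicator A x"
  have "emeasure (distr (density lborel (\<lambda>\<xi>. ennreal (1 - lagr_dy \<xi>))) lborel lagr_y) A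
      = (\<integral>\<^sup>+x. ?h x \<partial>lborel) + (\<integral>\<^sup>+x. ?h x \<partial>nu)"
    unfolding lagr_dy_def by (rule emeasure_distr_density_comp_lagr_y) measurable
  also have "(\<integral>\<^sup>+x. ?h x \<partial>nu)
      = emeasure nu (A \<inter> N) + (\<integral>\<^sup>+x. ennreal (energy_density x) * ?h x \<partial>lborel)"
  proof -
    have "(\<lambda>x. indicator N x * ?h x) = indicator (A \<inter> N)"
      by (auto simp: euler_dy_def split: split_indicator)
    then show ?thesis
      using nn_integral_nu_split[of ?h] by (simp add: M_is_borel)
  qed
  also have "(\<integral>\<^sup>+x. ?h x \<partial>lborel) + (emeasure nu (A \<inter> N) + (\<integral>\<^sup>+x. ennreal (energy_density x) * ?h x \<partial>lborel))
      = emeasure nu (A \<inter> N) + (\<integral>\<^sup>+x. ?h x + ennreal (energy_density x) * ?h x \<partial>lborel)"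
    by (subst nn_integral_add) (auto simp: ac_simps)
  also have "(\<integral>\<^sup>+x. ?h x + ennreal (energy_density x) * ?h x \<partial>lborel)
      = (\<integral>\<^sup>+x. ennreal (energy_density x) * indicator A x \<partial>lborel)"
    using AE_not_in_N
    by (rule nn_integral_cong_AE[OF AE_mp]) (auto simp: one_minus_euler_dy_balance split: split_indicator)
  also have "\<dots> = emeasure nu (A - N)"
    using emeasure_diff_N[of A] by (simp add: energy_density_def)
  also have "emeasure nu (A \<inter> N) + emeasure nu (A - N) = emeasure nu A"
    by (subst plus_emeasure) (auto simp: M_is_borel intro!: arg_cong[where f="emeasure nu"])
  finally show "emeasure (distr (density lborel (\<lambda>\<xi>. ennreal (1 - lagr_dy \<xi>))) lborel lagr_y) A
    = emeasure nu A" .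
qed (simp add: M_is_borel)

lemma nn_integral_lagr_dy_vimage: "A \<in> sets borel \<Longrightarrow> (\<integral>\<^sup>+ \<xi>. ennreal (lagr_dy \<xi>) * indicator (lagr_y -` A) \<xi> \<partial>lborel) = emeasure lborel A"
proof -
  assume A[measurable]: "A \<in> sets borel"
  have "emeasure lborel A = emeasure (distr (density lborel (\<lambda>\<xi>. ennreal (lagr_dy \<xi>))) lborel lagr_y) A"
    by (simp add: distr_density_lagr_dy)
  also have "\<dots> = (\<integral>\<^sup>+ \<xi>. ennreal (lagr_dy \<xi>) * indicator (lagr_y -` A) \<xi> \<partial>lborel)"
    using measurable_sets_borel[OF borel_measurable_lagr_y A] by (subst emeasure_distr) (auto simp: emeasure_density)
  finally show ?thesis by simp
qed

lemma nn_integral_one_minus_lagr_dy_vimage: "A \<in> sets borel \<Longrightarrow> (\<integral>\<^sup>+ \<xi>. ennreal (1 - lagr_dy \<xi>) * indicator (lagr_y -` A) \<xi> \<partial>lborel) = emeasure nu A"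
proof -
  assume A[measurable]: "A \<in> sets borel"
  have "emeasure nu A = emeasure (distr (density lborel (\<lambda>\<xi>. ennreal (1 - lagr_dy \<xi>))) lborel lagr_y) A"
    by (simp add: distr_density_one_minus_lagr_dy)
  also have "\<dots> = (\<integral>\<^sup>+ \<xi>. ennreal (1 - lagr_dy \<xi>) * indicator (lagr_y -` A) \<xi> \<partial>lborel)"
    using measurable_sets_borel[OF borel_measurable_lagr_y A] by (subst emeasure_distr) (auto simp: emeasure_density)
  finally show ?thesis by simp
qed

lemma set_integrable_lagr_dy: "set_integrable lborel {a..b} lagr_dy"
  unfolding set_integrable_def
proof (rule Bochner_Integration.integrable_bound[where f="\<lambda>x. indicator {a..b} x :: real"])
  show "integrable lborel (\<lambda>x. indicator {a..b} x :: real)"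
    by (rule integrable_real_indicator) (use emeasure_lborel_cbox_finite[of a b] in auto)
  show "(\<lambda>x. indicator {a..b} x *\<^sub>R lagr_dy x) \<in> borel_measurable lborel" by measurable
  show "AE x in lborel. norm (indicator {a..b} x *\<^sub>R lagr_dy x) \<le> norm (indicator {a..b} x :: real)"
    using lagr_dy_bounds by (auto split: split_indicator)
qed

lemma nn_integral_lagr_dy_Icc:
  assumes "a \<le> b"
  shows "(\<integral>\<^sup>+ \<xi>. ennreal (lagr_dy \<xi>) * indicator {a..b} \<xi> \<partial>lborel) = ennreal (lagr_y b - lagr_y a)"
proof (rule antisym)
  have "lagr_y -` {lagr_y a<..<lagr_y b} \<subseteq> {a..b}"
  proof
    fix \<eta> assume "\<eta> \<in> lagr_y -` {lagr_y a<..<lagr_y b}"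
    then have "lagr_y a < lagr_y \<eta>" "lagr_y \<eta> < lagr_y b" by auto
    then show "\<eta> \<in> {a..b}"
      using lagr_y_mono[of \<eta> a] lagr_y_mono[of b \<eta>] by force
  qed
  then have "(\<integral>\<^sup>+ \<xi>. ennreal (lagr_dy \<xi>) * indicator (lagr_y -` {lagr_y a<..<lagr_y b}) \<xi> \<partial>lborel)
      \<le> (\<integral>\<^sup>+ \<xi>. ennreal (lagr_dy \<xi>) * indicator {a..b} \<xi> \<partial>lborel)"
    by (intro nn_integral_mono) (auto split: split_indicator)
  then show "ennreal (lagr_y b - lagr_y a) \<le> (\<integral>\<^sup>+ \<xi>. ennreal (lagr_dy \<xi>) * indicator {a..b} \<xi> \<partial>lborel)"
    using lagr_y_mono[OF assms] by (simp add: nn_integral_lagr_dy_vimage)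
  have "{a..b} \<subseteq> lagr_y -` {lagr_y a..lagr_y b}"
    using lagr_y_mono by auto
  then have "(\<integral>\<^sup>+ \<xi>. ennreal (lagr_dy \<xi>) * indicator {a..b} \<xi> \<partial>lborel)
      \<le> (\<integral>\<^sup>+ \<xi>. ennreal (lagr_dy \<xi>) * indicator (lagr_y -` {lagr_y a..lagr_y b}) \<xi> \<partial>lborel)"
    by (intro nn_integral_mono) (auto split: split_indicator)
  then show "(\<integral>\<^sup>+ \<xi>. ennreal (lagr_dy \<xi>) * indicator {a..b} \<xi> \<partial>lborel) \<le> ennreal (lagr_y b - lagr_y a)"
    using lagr_y_mono[OF assms] by (simp add: nn_integral_lagr_dy_vimage)
qed

lemma lagr_y_diff_eq_integral:
  assumes "a \<le> b"
  shows "lagr_y b - lagr_y a = (LINT x:{a..b}|lborel. lagr_dy x)"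
proof -
  have "ennreal (LINT x:{a..b}|lborel. lagr_dy x)
      = (\<integral>\<^sup>+ x. ennreal (indicator {a..b} x *\<^sub>R lagr_dy x) \<partial>lborel)"
    unfolding set_lebesgue_integral_def
    by (rule nn_integral_eq_integral[OF set_integrable_lagr_dy[unfolded set_integrable_def], symmetric])
      (auto simp: lagr_dy_bounds)
  also have "\<dots> = ennreal (lagr_y b - lagr_y a)"
    using nn_integral_lagr_dy_Icc[OF assms]
    by (subst nn_integral_cong[where v="\<lambda>\<xi>. ennreal (lagr_dy \<xi>) * indicator {a..b} \<xi>"])
      (auto split: split_indicator)
  moreover have "0 \<le> (LINT x:{a..b}|lborel. lagr_dy x)"
    unfolding set_lebesgue_integral_def by (intro integral_nonneg_AE) (auto simp: lagr_dy_bounds)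
  ultimately show ?thesis
    using lagr_y_mono[OF assms] by (simp add: ennreal_inj)
qed

lemma AE_has_real_derivative_lagr_y: "AE \<xi> in lborel. (lagr_y has_real_derivative lagr_dy \<xi>) (at \<xi>)"
  by (rule AE_has_real_derivative_of_integral[OF set_integrable_lagr_dy lagr_y_diff_eq_integral])

lemma euler_dy_identity: "euler_dy x * (1 - euler_dy x) = (ux x * euler_dy x)\<^sup>2 + (rho x * euler_dy x)\<^sup>2"
proof (cases "x \<in> N")
  case True then show ?thesis by (simp add: euler_dy_def)
next
  case False
  have p: "1 + energy_density x > 0" using energy_density_nonneg[of x] by simp
  have "euler_dy x * (1 - euler_dy x) = energy_density x / (1 + energy_density x)\<^sup>2"
    using False p unfolding euler_dy_def by (simp add: field_simps power2_eq_square)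
  also have "\<dots> = energy_density x * (euler_dy x)\<^sup>2" using False p unfolding euler_dy_def by (simp add: power2_eq_square)
  also have "\<dots> = (ux x * euler_dy x)\<^sup>2 + (rho x * euler_dy x)\<^sup>2" unfolding energy_density_def by (simp add: algebra_simps power2_eq_square)
  finally show ?thesis .
qed

lemma lagr_dy_identity: "lagr_dy \<xi> * (1 - lagr_dy \<xi>) = (ux (lagr_y \<xi>) * lagr_dy \<xi>)\<^sup>2 + (rho (lagr_y \<xi>) * lagr_dy \<xi>)\<^sup>2"
  unfolding lagr_dy_def by (rule euler_dy_identity)

lemma lagr_dy_mult_le: "lagr_dy \<xi> * (1 - lagr_dy \<xi>) \<le> 1 - lagr_dy \<xi>"
  using lagr_dy_bounds[of \<xi>] by (simp add: mult_left_le_one_le)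

lemma integrable_one_minus_lagr_dy: "integrable lborel (\<lambda>\<xi>. 1 - lagr_dy \<xi>)"
proof (rule integrableI_nonneg)
  show "(\<lambda>\<xi>. 1 - lagr_dy \<xi>) \<in> borel_measurable lborel" by measurable
  show "AE x in lborel. 0 \<le> 1 - lagr_dy x" using lagr_dy_bounds by simp
  have "(\<integral>\<^sup>+ \<xi>. ennreal (1 - lagr_dy \<xi>) \<partial>lborel) = (\<integral>\<^sup>+ \<xi>. ennreal (1 - lagr_dy \<xi>) * indicator (lagr_y -` UNIV) \<xi> \<partial>lborel)"
    by simp
  also have "\<dots> = emeasure nu UNIV" by (rule nn_integral_one_minus_lagr_dy_vimage) simp
  also have "\<dots> < \<infinity>" by (simp add: emeasure_eq_measure)
  finally show "(\<integral>\<^sup>+ \<xi>. ennreal (1 - lagr_dy \<xi>) \<partial>lborel) < \<infinity>" .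
qed

lemma L2_if_square_le_one_minus_lagr_dy:
  assumes "h \<in> borel_measurable borel" and "AE \<xi> in lborel. (h \<xi>)\<^sup>2 \<le> 1 - lagr_dy \<xi>"
  shows "L2 h"
  unfolding L2_def
proof
  show "integrable lborel (\<lambda>x. (h x)\<^sup>2)"
  proof (rule Bochner_Integration.integrable_bound[OF integrable_one_minus_lagr_dy])
    show "(\<lambda>x. (h x)\<^sup>2) \<in> borel_measurable lborel" using assms(1) by measurable
    show "AE x in lborel. norm ((h x)\<^sup>2) \<le> norm (1 - lagr_dy x)"
      using assms(2) by eventually_elim (use lagr_dy_bounds in auto)
  qed
qed (use assms in simp)

lemma L2_deriv_if_square_le_one_minus_lagr_dy:
  assumes "continuous_on UNIV f" and "AE \<xi> in lborel. (deriv f \<xi>)\<^sup>2 \<le> 1 - lagr_dy \<xi>"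
  shows "L2 (deriv f)"
  using L2_if_square_le_one_minus_lagr_dy[OF borel_measurable_deriv[OF assms(1)] assms(2)] .

lemma square_one_minus_lagr_dy_le: "(1 - lagr_dy \<xi>)\<^sup>2 \<le> 1 - lagr_dy \<xi>"
  using lagr_dy_bounds[of \<xi>] by (simp add: power2_eq_square mult_left_le_one_le)

lemma AE_deriv_lagr_y_lagr_H:
  "AE \<xi> in lborel. deriv lagr_y \<xi> = lagr_dy \<xi> \<and> deriv lagr_H \<xi> = 1 - lagr_dy \<xi> \<and>
     deriv (\<lambda>\<xi>. lagr_y \<xi> - \<xi>) \<xi> = lagr_dy \<xi> - 1"
  using AE_has_real_derivative_lagr_y
proof eventually_elim
  case (elim \<xi>)
  have "(lagr_H has_real_derivative 1 - lagr_dy \<xi>) (at \<xi>)"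
    unfolding lagr_H_def[abs_def] by (rule DERIV_diff[OF DERIV_ident elim])
  moreover have "((\<lambda>\<xi>. lagr_y \<xi> - \<xi>) has_real_derivative lagr_dy \<xi> - 1) (at \<xi>)"
    by (rule DERIV_diff[OF elim DERIV_ident])
  ultimately show ?case
    using elim by (auto intro: DERIV_imp_deriv)
qed

lemma L2_deriv_lagr_y_minus_id: "L2 (deriv (\<lambda>\<xi>. lagr_y \<xi> - \<xi>))"
proof (rule L2_deriv_if_square_le_one_minus_lagr_dy)
  show "continuous_on UNIV (\<lambda>\<xi>. lagr_y \<xi> - \<xi>)"
    by (intro continuous_intros continuous_on_lagr_y)
  show "AE \<xi> in lborel. (deriv (\<lambda>\<xi>. lagr_y \<xi> - \<xi>) \<xi>)\<^sup>2 \<le> 1 - lagr_dy \<xi>"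
    using AE_deriv_lagr_y_lagr_H
    by eventually_elim (use square_one_minus_lagr_dy_le in \<open>simp add: power2_commute\<close>)
qed

lemma L2_deriv_lagr_H: "L2 (deriv lagr_H)"
  using continuous_on_lagr_H AE_deriv_lagr_y_lagr_H
  by (rule L2_deriv_if_square_le_one_minus_lagr_dy[OF _ AE_mp])
    (auto intro!: AE_I2 simp: square_one_minus_lagr_dy_le)

definition lagr_r :: "real \<Rightarrow> real" where
  "lagr_r \<xi> = rho (lagr_y \<xi>) * lagr_dy \<xi>"

lemma borel_measurable_lagr_r[measurable]: "lagr_r \<in> borel_measurable borel"
  unfolding lagr_r_def[abs_def] by measurable

lemma lagr_r_square_le: "(lagr_r \<xi>)\<^sup>2 \<le> 1 - lagr_dy \<xi>"
  using lagr_dy_identity[of \<xi>] lagr_dy_mult_le[of \<xi>] unfolding lagr_r_def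
  by (smt (verit) zero_le_power2)

lemma L2_lagr_r: "L2 lagr_r"
  by (rule L2_if_square_le_one_minus_lagr_dy) (auto simp: lagr_r_square_le)

lemma ess_bounded_lagr_r: "ess_bounded lagr_r"
  unfolding ess_bounded_def
proof (intro exI[of _ 1] AE_I2)
  fix \<xi>
  have "(lagr_r \<xi>)\<^sup>2 \<le> 1" using lagr_r_square_le[of \<xi>] lagr_dy_bounds[of \<xi>] by linarith
  then show "\<bar>lagr_r \<xi>\<bar> \<le> 1" by (simp add: abs_square_le_1)
qed

lemma set_integral_eq_lagr_r:
  assumes [measurable]: "A \<in> sets borel"
  shows "(LINT x:A|lborel. rho x) = (LINT \<xi>:(lagr_y -` A)|lborel. lagr_r \<xi>)"
proof -
  have "(LINT \<xi>:(lagr_y -` A)|lborel. lagr_r \<xi>)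
      = (\<integral>\<xi>. lagr_dy \<xi> *\<^sub>R (indicator A (lagr_y \<xi>) * rho (lagr_y \<xi>)) \<partial>lborel)"
    unfolding set_lebesgue_integral_def lagr_r_def
    by (rule Bochner_Integration.integral_cong) (auto split: split_indicator)
  also have "\<dots> = integral\<^sup>L (density lborel (\<lambda>\<xi>. ennreal (lagr_dy \<xi>)))
      (\<lambda>\<xi>. indicator A (lagr_y \<xi>) * rho (lagr_y \<xi>))"
    by (rule integral_density[symmetric]) (auto simp: lagr_dy_bounds)
  also have "\<dots> = integral\<^sup>L (distr (density lborel (\<lambda>\<xi>. ennreal (lagr_dy \<xi>))) lborel lagr_y)
      (\<lambda>x. indicator A x * rho x)"
    by (rule integral_distr[symmetric]) auto
  also have "\<dots> = (LINT x:A|lborel. rho x)"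
    unfolding distr_density_lagr_dy set_lebesgue_integral_def by simp
  finally show ?thesis by simp
qed

lemma nu_eq_distr_lagr_H: "nu = distr (density lborel (\<lambda>\<xi>. ennreal (deriv lagr_H \<xi>))) lborel lagr_y"
proof -
  have [measurable]: "deriv lagr_H \<in> borel_measurable borel"
    by (rule borel_measurable_deriv[OF continuous_on_lagr_H])
  have "density lborel (\<lambda>\<xi>. ennreal (deriv lagr_H \<xi>)) = density lborel (\<lambda>\<xi>. ennreal (1 - lagr_dy \<xi>))"
    by (rule density_cong) (use AE_deriv_lagr_y_lagr_H in \<open>auto elim: AE_mp\<close>)
  then show ?thesis
    using distr_density_one_minus_lagr_dy by simp
qed

lemma emeasure_N_eq_0_if_absolutely_continuous:
  assumes "ac_part_density nu g" and "nu = density lborel g"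
  shows "emeasure nu N = 0"
  using assms emeasure_density_lborel_null[OF _ N_sets N_null] by (simp add: ac_part_density_def)

lemma AE_lagr_y_not_in_N:
  assumes "emeasure nu N = 0"
  shows "AE \<xi> in lborel. lagr_y \<xi> \<notin> N"
proof -
  have "emeasure lborel (lagr_y -` N) = 0"
    using emeasure_lagr_y_vimage[OF N_sets] assms N_null by simp
  then have "AE \<xi> in lborel. \<xi> \<notin> lagr_y -` N"
    using measurable_sets_borel[OF borel_measurable_lagr_y N_sets]
    by (intro AE_not_in) (simp add: null_sets_def)
  then show ?thesis by simp
qed

end

section \<open>The Lagrangian variables of an Eulerian state\<close>

locale lagr_construction = energy_measure nu ux rho N for nu ux rho N +
  fixes u :: "real \<Rightarrow> real"
  assumes u_bounded: "bounded (range u)"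
    and set_integrable_ux: "\<And>a b. a \<le> b \<Longrightarrow> set_integrable lborel {a..b} ux"
    and u_diff_eq_integral: "\<And>a b. a \<le> b \<Longrightarrow> u b - u a = (LINT x:{a..b}|lborel. ux x)"
    and integrable_ux_square: "integrable lborel (\<lambda>x. (ux x)\<^sup>2)"
    and u_has_derivative: "\<And>x. x \<notin> N \<Longrightarrow> (u has_real_derivative ux x) (at x)"
begin

definition ux_energy :: "real \<Rightarrow> real \<Rightarrow> real" where
  "ux_energy a b = (LINT x:{a..b}|lborel. (ux x)\<^sup>2)"

lemma integrable_ux_energy: "integrable lborel (\<lambda>x. indicator {a..b} x *\<^sub>R (ux x)\<^sup>2)"
  by (rule integrable_mult_indicator) (auto simp: integrable_ux_square)

lemma ux_energy_nonneg: "0 \<le> ux_energy a b"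
  unfolding ux_energy_def set_lebesgue_integral_def by (intro integral_nonneg_AE) auto

lemma ux_energy_nn_integral: "ennreal (ux_energy a b) = (\<integral>\<^sup>+ x. ennreal ((ux x)\<^sup>2) * indicator {a..b} x \<partial>lborel)"
proof -
  have "(\<integral>\<^sup>+ x. ennreal (indicator {a..b} x *\<^sub>R (ux x)\<^sup>2) \<partial>lborel) = ennreal (ux_energy a b)"
    unfolding ux_energy_def set_lebesgue_integral_def by (rule nn_integral_eq_integral[OF integrable_ux_energy]) auto
  moreover have "(\<integral>\<^sup>+ x. ennreal (indicator {a..b} x *\<^sub>R (ux x)\<^sup>2) \<partial>lborel)
      = (\<integral>\<^sup>+ x. ennreal ((ux x)\<^sup>2) * indicator {a..b} x \<partial>lborel)"
    by (rule nn_integral_cong) (simp split: split_indicator)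
  ultimately show ?thesis by simp
qed

lemma ux_energy_le_emeasure_nu: "ennreal (ux_energy a b) \<le> emeasure nu {a<..<b}"
proof -
  have "(\<integral>\<^sup>+ x. ennreal ((ux x)\<^sup>2) * indicator {a..b} x \<partial>lborel)
      = (\<integral>\<^sup>+ x. ennreal ((ux x)\<^sup>2) * indicator {a<..<b} x \<partial>lborel)"
    using AE_lborel_singleton[of a] AE_lborel_singleton[of b]
    by (intro nn_integral_cong_AE) (auto elim!: AE_mp split: split_indicator)
  also have "\<dots> \<le> (\<integral>\<^sup>+ x. ennreal (energy_density x) * indicator {a<..<b} x \<partial>lborel)"
    by (intro nn_integral_mono) (auto simp: energy_density_def split: split_indicator intro!: ennreal_leI)
  also have "\<dots> = emeasure nu ({a<..<b} - N)"
    using emeasure_diff_N[of "{a<..<b}"] by (simp add: energy_density_def)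
  also have "\<dots> \<le> emeasure nu {a<..<b}"
    by (intro emeasure_mono) (auto simp: M_is_borel)
  finally show ?thesis
    using ux_energy_nn_integral by simp
qed

lemma lagr_y_diff_plus_ux_energy_le:
  assumes "\<xi> \<le> \<xi>'"
  shows "(lagr_y \<xi>' - lagr_y \<xi>) + ux_energy (lagr_y \<xi>) (lagr_y \<xi>') \<le> \<xi>' - \<xi>"
proof -
  define a b where "a = lagr_y \<xi>" and "b = lagr_y \<xi>'"
  have ab: "a \<le> b" unfolding a_def b_def using lagr_y_mono[OF assms] .
  have "ennreal ((b - a) + ux_energy a b) = emeasure lborel {a<..<b} + ennreal (ux_energy a b)"
    using ab ux_energy_nonneg[of a b] by (simp add: ennreal_plus)
  also have "\<dots> \<le> emeasure lborel {a<..<b} + emeasure nu {a<..<b}"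
    using ux_energy_le_emeasure_nu[of a b] by (simp add: add_left_mono)
  also have "\<dots> = emeasure lborel (lagr_y -` {a<..<b})"
    by (simp add: emeasure_lagr_y_vimage)
  also have "\<dots> \<le> emeasure lborel {\<xi><..<\<xi>'}"
  proof (rule emeasure_mono)
    show "lagr_y -` {a<..<b} \<subseteq> {\<xi><..<\<xi>'}"
    proof
      fix \<eta> assume "\<eta> \<in> lagr_y -` {a<..<b}"
      then have "a < lagr_y \<eta>" "lagr_y \<eta> < b" by auto
      then have "\<xi> < \<eta>" "\<eta> < \<xi>'" unfolding a_def b_def using lagr_y_mono by (meson not_le)+
      then show "\<eta> \<in> {\<xi><..<\<xi>'}" by simp
    qed
  qed simp
  also have "\<dots> = ennreal (\<xi>' - \<xi>)" using assms by simp
  finally have "ennreal ((b - a) + ux_energy a b) \<le> ennreal (\<xi>' - \<xi>)" .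
  then have "(b - a) + ux_energy a b \<le> \<xi>' - \<xi>" using assms by (simp add: ennreal_le_iff)
  then show ?thesis unfolding a_def b_def .
qed

definition lagr_U :: "real \<Rightarrow> real" where
  "lagr_U \<xi> = u (lagr_y \<xi>)"

lemma lagr_U_diff_le_ordered:
  assumes "\<xi> \<le> \<xi>'" "t > 0"
  shows "\<bar>lagr_U \<xi>' - lagr_U \<xi>\<bar> \<le> ((lagr_y \<xi>' - lagr_y \<xi>) / t + t * (\<xi>' - \<xi> - (lagr_y \<xi>' - lagr_y \<xi>))) / 2"
proof -
  have ab: "lagr_y \<xi> \<le> lagr_y \<xi>'" using lagr_y_mono[OF assms(1)] .
  have "\<bar>lagr_U \<xi>' - lagr_U \<xi>\<bar> \<le> ((lagr_y \<xi>' - lagr_y \<xi>) / t + t * ux_energy (lagr_y \<xi>) (lagr_y \<xi>')) / 2"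
    unfolding lagr_U_def ux_energy_def by (rule abs_diff_le_amgm_integral[OF set_integrable_ux[OF ab] u_diff_eq_integral[OF ab] integrable_ux_square ab assms(2)])
  also have "\<dots> \<le> ((lagr_y \<xi>' - lagr_y \<xi>) / t + t * (\<xi>' - \<xi> - (lagr_y \<xi>' - lagr_y \<xi>))) / 2"
    using lagr_y_diff_plus_ux_energy_le[OF assms(1)] assms(2) by (simp add: divide_right_mono)
  finally show ?thesis .
qed

lemma lagr_U_diff_le:
  assumes "t > 0"
  shows "\<bar>lagr_U \<xi>' - lagr_U \<xi>\<bar> \<le> (\<bar>lagr_y \<xi>' - lagr_y \<xi>\<bar> / t + t * \<bar>\<xi>' - \<xi>\<bar>) / 2"
proof (cases "\<xi> \<le> \<xi>'")
  case True
  have "lagr_y \<xi> \<le> lagr_y \<xi>'" using lagr_y_mono[OF True] .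
  moreover have "0 \<le> lagr_y \<xi>' - lagr_y \<xi>" using calculation by simp
  ultimately show ?thesis using lagr_U_diff_le_ordered[OF True assms] True assms
    by (smt (verit, best) divide_right_mono mult_left_mono)
next
  case False
  then have F: "\<xi>' \<le> \<xi>" by simp
  have "lagr_y \<xi>' \<le> lagr_y \<xi>" using lagr_y_mono[OF F] .
  then show ?thesis using lagr_U_diff_le_ordered[OF F assms] F assms
    by (smt (verit, best) divide_right_mono mult_left_mono)
qed

lemma lagr_U_diff_le_diff: "\<bar>lagr_U \<xi>' - lagr_U \<xi>\<bar> \<le> \<bar>\<xi>' - \<xi>\<bar>"
proof (cases "\<xi> \<le> \<xi>'")
  case True
  show ?thesis using lagr_U_diff_le_ordered[OF True, of 1] True by simp
next
  case False
  then have F: "\<xi>' \<le> \<xi>" by simp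
  have "\<bar>lagr_U \<xi> - lagr_U \<xi>'\<bar> * 2 \<le> \<xi> - \<xi>'" using lagr_U_diff_le_ordered[OF F, of 1] F by simp
  then show ?thesis using F by (smt (verit) abs_minus_commute abs_ge_zero)
qed

lemma has_real_derivative_lagr_U:
  assumes y': "(lagr_y has_real_derivative lagr_dy \<xi>) (at \<xi>)"
  shows "(lagr_U has_real_derivative ux (lagr_y \<xi>) * lagr_dy \<xi>) (at \<xi>)"
proof (cases "lagr_y \<xi> \<in> N")
  case False
  then show ?thesis
    unfolding lagr_U_def[abs_def] by (rule DERIV_chain'[OF y' u_has_derivative])
next
  case True
  \<comment> \<open>no chain rule here, but \<open>y\<^sub>\<xi> = 0\<close> and the AM-GM bound on \<open>U\<close> force \<open>U\<^sub>\<xi> = 0\<close>\<close>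
  then have "lagr_dy \<xi> = 0" by (simp add: lagr_dy_def euler_dy_def)
  moreover have "(lagr_U has_real_derivative 0) (at \<xi>)"
  proof (rule has_real_derivative_zero_if_amgm_dominated)
    show "(lagr_y has_real_derivative 0) (at \<xi>)"
      using y' \<open>lagr_dy \<xi> = 0\<close> by simp
    show "\<bar>lagr_U (\<xi> + h) - lagr_U \<xi>\<bar> \<le> (\<bar>lagr_y (\<xi> + h) - lagr_y \<xi>\<bar> / t + t * \<bar>h\<bar>) / 2"
      if "t > 0" for t h
      using lagr_U_diff_le[OF that, of "\<xi> + h" \<xi>] by simp
  qed
  ultimately show ?thesis by simp
qed

lemma lipschitz_lagr_U: "1-lipschitz_on UNIV lagr_U"
  by (rule lipschitz_onI) (auto simp: dist_real_def lagr_U_diff_le_diff)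

lemma W1inf_lagr_U: "W1inf lagr_U"
  using u_bounded lipschitz_lagr_U unfolding W1inf_def bounded_iff lagr_U_def by auto

lemma L2_deriv_lagr_U: "L2 (deriv lagr_U)"
proof (rule L2_deriv_if_square_le_one_minus_lagr_dy)
  show "continuous_on UNIV lagr_U"
    using lipschitz_lagr_U lipschitz_on_continuous_on by blast
  show "AE \<xi> in lborel. (deriv lagr_U \<xi>)\<^sup>2 \<le> 1 - lagr_dy \<xi>"
    using AE_has_real_derivative_lagr_y
  proof eventually_elim
    case (elim \<xi>)
    have "(ux (lagr_y \<xi>) * lagr_dy \<xi>)\<^sup>2 \<le> lagr_dy \<xi> * (1 - lagr_dy \<xi>)"
      using lagr_dy_identity[of \<xi>] by simp
    then show ?case
      using DERIV_imp_deriv[OF has_real_derivative_lagr_U[OF elim]] lagr_dy_mult_le[of \<xi>] by simp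
  qed
qed

lemma lagr_in_F_set:
  assumes "alpha_eq1 \<alpha> \<longrightarrow> emeasure nu N = 0"
  shows "(lagr_y, lagr_U, lagr_H, lagr_r, lagr_H) \<in> F_set \<alpha>"
proof -
  have derivs: "AE \<xi> in lborel. deriv lagr_y \<xi> = lagr_dy \<xi> \<and> deriv lagr_H \<xi> = 1 - lagr_dy \<xi> \<and>
      deriv lagr_U \<xi> = ux (lagr_y \<xi>) * lagr_dy \<xi>"
    using AE_has_real_derivative_lagr_y AE_deriv_lagr_y_lagr_H
    by eventually_elim (auto intro: DERIV_imp_deriv has_real_derivative_lagr_U)
  have "AE \<xi> in lborel. deriv lagr_y \<xi> \<ge> 0 \<and> deriv lagr_H \<xi> \<ge> 0 \<and>
      deriv lagr_y \<xi> + deriv lagr_H \<xi> > 1/2 \<and>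
      deriv lagr_y \<xi> * deriv lagr_H \<xi> = (deriv lagr_U \<xi>)\<^sup>2 + (lagr_r \<xi>)\<^sup>2"
    using derivs by eventually_elim (use lagr_dy_bounds lagr_dy_identity in \<open>auto simp: lagr_r_def\<close>)
  moreover have "alpha_eq1 \<alpha> \<longrightarrow> (AE \<xi> in lborel. deriv lagr_y \<xi> = 0 \<longrightarrow> deriv lagr_H \<xi> = 0)"
  proof
    assume "alpha_eq1 \<alpha>"
    then have "emeasure nu N = 0" using assms by simp
    then show "AE \<xi> in lborel. deriv lagr_y \<xi> = 0 \<longrightarrow> deriv lagr_H \<xi> = 0"
      using derivs AE_lagr_y_not_in_N[OF \<open>emeasure nu N = 0\<close>]
      by eventually_elim (auto simp: lagr_dy_def dest: euler_dy_pos)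
  qed
  \<comment> \<open>\<open>y\<^sub>\<xi> + H\<^sub>\<xi> = 1\<close>; since \<open>V = H\<close>, the constant \<open>\<kappa> = 1\<close> serves when \<open>\<alpha> < 1\<close>\<close>
  ultimately show ?thesis
    unfolding F_set_def mem_Collect_eq prod.case E1_def E2_def
    using W1inf_lagr_y_minus_id W1inf_lagr_H W1inf_lagr_U lagr_H_tendsto_at_bot
      L2_deriv_lagr_y_minus_id L2_deriv_lagr_U L2_deriv_lagr_H L2_lagr_r ess_bounded_lagr_r
    by (auto simp: W1inf_def elim: AE_mp intro!: exI[of _ "1/2"] exI[of _ "\<lambda>_. 1"])
qed

lemma lagr_in_Fi_set_M_rel:
  assumes "alpha_eq1 \<alpha> \<longrightarrow> emeasure nu N = 0"
  shows "(lagr_y, lagr_U, lagr_H, lagr_r, lagr_H) \<in> Fi_set \<alpha>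
    \<and> M_rel (lagr_y, lagr_U, lagr_H, lagr_r, lagr_H) (u, rho, nu, nu)"
  using lagr_in_F_set[OF assms] set_integral_eq_lagr_r nu_eq_distr_lagr_H
  unfolding Fi_set_def M_rel_def by (auto simp: lagr_U_def)

end

section \<open>Eulerian states with \<open>\<nu> = \<mu>\<close>\<close>

lemma ac_part_density_exception_superset:
  assumes "ac_part_density m f" and [measurable]: "N1 \<in> sets borel" and "emeasure lborel N1 = 0"
  obtains N where "N \<in> sets borel" "emeasure lborel N = 0" "N1 \<subseteq> N"
    "\<And>A. A \<in> sets borel \<Longrightarrow> emeasure m (A - N) = (\<integral>\<^sup>+x. f x * indicator A x \<partial>lborel)"
proof -
  obtain N0 where N0[measurable]: "N0 \<in> sets borel" and "emeasure lborel N0 = 0"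
    and N0_ac: "\<And>A. A \<in> sets borel \<Longrightarrow> emeasure m (A - N0) = (\<integral>\<^sup>+x. f x * indicator A x \<partial>lborel)"
    using assms(1) unfolding ac_part_density_def by blast
  have "emeasure lborel (N0 \<union> N1) \<le> emeasure lborel N0 + emeasure lborel N1"
    by (intro emeasure_subadditive) auto
  then have null: "emeasure lborel (N0 \<union> N1) = 0"
    using \<open>emeasure lborel N0 = 0\<close> assms(3) by simp
  have N1_AE: "AE x in lborel. x \<notin> N1"
    using assms(3) by (intro AE_not_in) (simp add: null_sets_def)
  have "emeasure m (A - (N0 \<union> N1)) = (\<integral>\<^sup>+x. f x * indicator A x \<partial>lborel)"
    if [measurable]: "A \<in> sets borel" for A
  proof -
    have "emeasure m (A - (N0 \<union> N1)) = (\<integral>\<^sup>+x. f x * indicator (A - N1) x \<partial>lborel)"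
    proof -
      have "A - (N0 \<union> N1) = (A - N1) - N0" by blast
      then show ?thesis using N0_ac[of "A - N1"] by simp
    qed
    also have "\<dots> = (\<integral>\<^sup>+x. f x * indicator A x \<partial>lborel)"
      using N1_AE by (intro nn_integral_cong_AE) (auto split: split_indicator)
    finally show ?thesis .
  qed
  then show thesis
    using that[of "N0 \<union> N1"] null by auto
qed

lemma lagr_construction_exists:
  fixes u ux rho :: "real \<Rightarrow> real" and nu :: "real measure"
  assumes "fin_borel_measure nu" and "ess_bounded u" and "has_L2_deriv u ux" and "L2 rho"
    and "ac_part_density nu (\<lambda>x. ennreal ((ux x)\<^sup>2 + (rho x)\<^sup>2))"
  obtains N where "lagr_construction nu ux rho N u"
proof -
  have set_integrable_ux: "\<And>a b. a \<le> b \<Longrightarrow> set_integrable lborel {a..b} ux"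
    and u_diff: "\<And>a b. a \<le> b \<Longrightarrow> u b - u a = (LINT x:{a..b}|lborel. ux x)"
    using assms(3) unfolding has_L2_deriv_def by auto
  obtain N1 where N1: "{x \<in> space lborel. \<not> (u has_real_derivative ux x) (at x)} \<subseteq> N1"
    "emeasure lborel N1 = 0" "N1 \<in> sets lborel"
    using AE_has_real_derivative_of_integral[OF set_integrable_ux u_diff] by (rule AE_E)
  obtain N where N: "N \<in> sets borel" "emeasure lborel N = 0" "N1 \<subseteq> N"
    "\<And>A. A \<in> sets borel \<Longrightarrow>
       emeasure nu (A - N) = (\<integral>\<^sup>+x. ennreal ((ux x)\<^sup>2 + (rho x)\<^sup>2) * indicator A x \<partial>lborel)"
    using ac_part_density_exception_superset[OF assms(5)] N1(2,3) by auto
  have "bounded (range u)"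
    using assms(2) continuous_on_if_integral_differences[OF set_integrable_ux u_diff]
    by (rule bounded_range_if_ess_bounded_continuous)
  interpret finite_borel_measure nu
    using assms(1) unfolding fin_borel_measure_def
    by (intro finite_borel_measure.intro finite_borel_measure_axioms.intro) auto
  have "lagr_construction nu ux rho N u"
  proof unfold_locales
    show "ux \<in> borel_measurable borel" "integrable lborel (\<lambda>x. (ux x)\<^sup>2)"
      using assms(3) unfolding has_L2_deriv_def L2_def by auto
    show "rho \<in> borel_measurable borel"
      using assms(4) unfolding L2_def by simp
    show "(u has_real_derivative ux x) (at x)" if "x \<notin> N" for x
      using that N1(1) N(3) by auto
  qed (use N set_integrable_ux u_diff \<open>bounded (range u)\<close> in auto)
  then show thesis ..
qed

theorem proposition3p11:
  fixes \<alpha> u \<rho> :: "real \<Rightarrow> real" and \<nu> \<mu> :: "real measure"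
  assumes "admissible_alpha \<alpha>"
    and "(u, \<rho>, \<nu>, \<mu>) \<in> D_set \<alpha>"
  shows "(u, \<rho>, \<nu>, \<mu>) \<in> D0_set \<alpha> \<longleftrightarrow> \<nu> = \<mu>"
proof
  assume "(u, \<rho>, \<nu>, \<mu>) \<in> D0_set \<alpha>"
  then obtain y U H r V where "(y, U, H, r, V) \<in> Fi_set \<alpha>" "M_rel (y, U, H, r, V) (u, \<rho>, \<nu>, \<mu>)"
    unfolding D0_set_def by auto
  then show "\<nu> = \<mu>"
    unfolding Fi_set_def M_rel_def by simp
next
  assume "\<nu> = \<mu>"
  obtain ux where D: "fin_borel_measure \<nu>" "ess_bounded u" "has_L2_deriv u ux" "L2 \<rho>"
      "ac_part_density \<nu> (\<lambda>x. ennreal ((ux x)\<^sup>2 + (\<rho> x)\<^sup>2))"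
      "alpha_eq1 \<alpha> \<longrightarrow> (\<exists>g. ac_part_density \<nu> g \<and> \<nu> = density lborel g)"
    using assms(2) \<open>\<nu> = \<mu>\<close> unfolding D_set_def by auto
  obtain N where "lagr_construction \<nu> ux \<rho> N u"
    using lagr_construction_exists[OF D(1-5)] .
  then interpret lagr_construction \<nu> ux \<rho> N u .
  have "alpha_eq1 \<alpha> \<longrightarrow> emeasure \<nu> N = 0"
    using D(6) emeasure_N_eq_0_if_absolutely_continuous by blast
  then show "(u, \<rho>, \<nu>, \<mu>) \<in> D0_set \<alpha>"
    using lagr_in_Fi_set_M_rel \<open>\<nu> = \<mu>\<close> unfolding D0_set_def by blast
qed

end
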